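(* There is an embedding $\mathcal{B} \hookrightarrow \mathcal{G}$ which, for every $X \subseteq \omega$, restricts to an embedding $\mathcal{B}^X \hookrightarrow \mathcal{G}^{X \oplus \overline{X}}$ (where $\overline{X} = \omega \setminus X$ and $X\oplus \overline X = \{2n : n\in X\}\cup\{2n+1 : n \notin X\}$).
   Context: A partial combinatory algebra (pca) is a set $A$ with a partial binary operation $\cdot$ (application, associating to the left) containing distinct elements $\mathrm{s},\mathrm{k}$ such that for all $a,b,c$: $\mathrm{k}ab$ is defined and equals $a$; $\mathrm{s}ab$ is defined; and $\mathrm{s}abc \simeq (ac)(bc)$ (Kleene equality). An embedding of pcas $\mathcal{A}\hookrightarrow\mathcal{A}'$ is an injective map $f$ such that whenever $a\cdot b$ is defined in $\mathcal{A}$, $f(a)\cdot f(b)$ is defined in $\mathcal{A}'$ and equals $f(a\cdot b)$. Van Oosten's model $\mathcal{B}$ (in the coding used here): the elements are the partial functions $\omega \rightharpoonup \omega$, and for $\varphi,\psi$ the application $\varphi\cdot\psi$ is the partial function $n \mapsto \Phi^{\varphi\oplus\psi}_{\varphi(0)}(n)$, where $\Phi_e$ is the $e$-th Turing functional, $(\varphi\oplus\psi)(2n)\simeq\varphi(n)$, $(\varphi\oplus\psi)(2n+1)\simeq\psi(n)$, and a query to the oracle at a point where it is undefined makes the computation diverge; application is always defined. $\mathcal{B}^X$ is the sub-pca of partial $X$-computable functions. Scott's graph model $\mathcal{G}$: the carrier is $\mathcal{P}(\omega)$, with application $A\cdot B = \{n : \exists u\, (\langle n,u\rangle \in A \wedge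 D_u\subseteq B)\}$, where $\langle\cdot,\cdot\rangle$ is a bijective computable pairing with $\langle 0,0\rangle=0$ and $D_u$ is the finite set with canonical code $u$ (the set $F$ is coded by $\sum_{k\in F}2^k$). For $Y\subseteq\omega$, $\mathcal{G}^Y$ is the least class of sets containing $Y$ and all c.e. sets and closed under application; equivalently the sets enumeration-reducible to $Y$. These are pcas. *)

theory Defs
  imports Main "HOL-Library.Nat_Bijection"
begin

text \<open>Programs of a unary partial-recursive basis with Cantor pairing
  (prod_encode / prod_decode) and an oracle query instruction.\<close>

datatype prog =
    Zero | Succ | Ident | Fst | Snd | Query
  | PairP prog prog | Comp prog prog | Prec prog prog | Mu prog

text \<open>Big-step semantics relative to a partial oracle; a query at a point
  where the oracle is undefined has no derivation, i.e. diverges.\<close>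

inductive ev :: "(nat \<Rightarrow> nat option) \<Rightarrow> prog \<Rightarrow> nat \<Rightarrow> nat \<Rightarrow> bool"
  for orc :: "nat \<Rightarrow> nat option" where
  ev_zero: "ev orc Zero x 0"
| ev_succ: "ev orc Succ x (Suc x)"
| ev_ident: "ev orc Ident x x"
| ev_fst: "ev orc Fst x (fst (prod_decode x))"
| ev_snd: "ev orc Snd x (snd (prod_decode x))"
| ev_query: "orc x = Some v \<Longrightarrow> ev orc Query x v"
| ev_pair: "ev orc f x a \<Longrightarrow> ev orc g x b \<Longrightarrow> ev orc (PairP f g) x (prod_encode (a, b))"
| ev_comp: "ev orc g x y \<Longrightarrow> ev orc f y z \<Longrightarrow> ev orc (Comp f g) x z"
| ev_prec0: "ev orc f y v \<Longrightarrow> ev orc (Prec f g) (prod_encode (0, y)) v"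
| ev_precS: "ev orc (Prec f g) (prod_encode (n, y)) v \<Longrightarrow>
     ev orc g (prod_encode (n, prod_encode (v, y))) w \<Longrightarrow>
     ev orc (Prec f g) (prod_encode (Suc n, y)) w"
| ev_mu: "ev orc f (prod_encode (y, x)) 0 \<Longrightarrow>
     (\<forall>i<y. \<exists>v. v \<noteq> 0 \<and> ev orc f (prod_encode (i, x)) v) \<Longrightarrow>
     ev orc (Mu f) x y"

lemma fst_prod_decode_le: "fst (prod_decode m) \<le> m"
  by (metis le_prod_encode_1 prod.collapse prod_decode_inverse)

lemma snd_prod_decode_le: "snd (prod_decode m) \<le> m"
  by (metis le_prod_encode_2 prod.collapse prod_decode_inverse)

function decode :: "nat \<Rightarrow> prog" where
  "decode e =
    (if e mod 10 = 0 then Zero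
     else if e mod 10 = 1 then Succ
     else if e mod 10 = 2 then Ident
     else if e mod 10 = 3 then Fst
     else if e mod 10 = 4 then Snd
     else if e mod 10 = 5 then Query
     else if e mod 10 = 6 then PairP (decode (fst (prod_decode (e div 10))))
                                     (decode (snd (prod_decode (e div 10))))
     else if e mod 10 = 7 then Comp (decode (fst (prod_decode (e div 10))))
                                    (decode (snd (prod_decode (e div 10))))
     else if e mod 10 = 8 then Prec (decode (fst (prod_decode (e div 10))))
                                    (decode (snd (prod_decode (e div 10))))
     else Mu (decode (e div 10)))"
  by auto
termination
proof (relation "measure id")
  have lt: "e div 10 < e" if "e mod 10 \<noteq> 0" for e :: nat
  proof -
    have "e > 0" using that by (cases e) auto
    thus ?thesis by simp
  qed
  show "wf (measure id)" by simp
  fix e :: nat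
  show "e mod 10 \<noteq> 0 \<Longrightarrow> e mod 10 \<noteq> 1 \<Longrightarrow> e mod 10 \<noteq> 2 \<Longrightarrow> e mod 10 \<noteq> 3 \<Longrightarrow>
        e mod 10 \<noteq> 4 \<Longrightarrow> e mod 10 \<noteq> 5 \<Longrightarrow> e mod 10 = 6 \<Longrightarrow>
        (fst (prod_decode (e div 10)), e) \<in> measure id"
    using lt[of e] fst_prod_decode_le[of "e div 10"] by simp
  show "e mod 10 \<noteq> 0 \<Longrightarrow> e mod 10 \<noteq> 1 \<Longrightarrow> e mod 10 \<noteq> 2 \<Longrightarrow> e mod 10 \<noteq> 3 \<Longrightarrow>
        e mod 10 \<noteq> 4 \<Longrightarrow> e mod 10 \<noteq> 5 \<Longrightarrow> e mod 10 = 6 \<Longrightarrow>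
        (snd (prod_decode (e div 10)), e) \<in> measure id"
    using lt[of e] snd_prod_decode_le[of "e div 10"] by simp
  show "e mod 10 \<noteq> 0 \<Longrightarrow> e mod 10 \<noteq> 1 \<Longrightarrow> e mod 10 \<noteq> 2 \<Longrightarrow> e mod 10 \<noteq> 3 \<Longrightarrow>
        e mod 10 \<noteq> 4 \<Longrightarrow> e mod 10 \<noteq> 5 \<Longrightarrow> e mod 10 \<noteq> 6 \<Longrightarrow> e mod 10 = 7 \<Longrightarrow>
        (fst (prod_decode (e div 10)), e) \<in> measure id"
    using lt[of e] fst_prod_decode_le[of "e div 10"] by simp
  show "e mod 10 \<noteq> 0 \<Longrightarrow> e mod 10 \<noteq> 1 \<Longrightarrow> e mod 10 \<noteq> 2 \<Longrightarrow> e mod 10 \<noteq> 3 \<Longrightarrow>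
        e mod 10 \<noteq> 4 \<Longrightarrow> e mod 10 \<noteq> 5 \<Longrightarrow> e mod 10 \<noteq> 6 \<Longrightarrow> e mod 10 = 7 \<Longrightarrow>
        (snd (prod_decode (e div 10)), e) \<in> measure id"
    using lt[of e] snd_prod_decode_le[of "e div 10"] by simp
  show "e mod 10 \<noteq> 0 \<Longrightarrow> e mod 10 \<noteq> 1 \<Longrightarrow> e mod 10 \<noteq> 2 \<Longrightarrow> e mod 10 \<noteq> 3 \<Longrightarrow>
        e mod 10 \<noteq> 4 \<Longrightarrow> e mod 10 \<noteq> 5 \<Longrightarrow> e mod 10 \<noteq> 6 \<Longrightarrow> e mod 10 \<noteq> 7 \<Longrightarrow>
        e mod 10 = 8 \<Longrightarrow> (fst (prod_decode (e div 10)), e) \<in> measure id"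
    using lt[of e] fst_prod_decode_le[of "e div 10"] by simp
  show "e mod 10 \<noteq> 0 \<Longrightarrow> e mod 10 \<noteq> 1 \<Longrightarrow> e mod 10 \<noteq> 2 \<Longrightarrow> e mod 10 \<noteq> 3 \<Longrightarrow>
        e mod 10 \<noteq> 4 \<Longrightarrow> e mod 10 \<noteq> 5 \<Longrightarrow> e mod 10 \<noteq> 6 \<Longrightarrow> e mod 10 \<noteq> 7 \<Longrightarrow>
        e mod 10 = 8 \<Longrightarrow> (snd (prod_decode (e div 10)), e) \<in> measure id"
    using lt[of e] snd_prod_decode_le[of "e div 10"] by simp
  show "e mod 10 \<noteq> 0 \<Longrightarrow> e mod 10 \<noteq> 1 \<Longrightarrow> e mod 10 \<noteq> 2 \<Longrightarrow> e mod 10 \<noteq> 3 \<Longrightarrow>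
        e mod 10 \<noteq> 4 \<Longrightarrow> e mod 10 \<noteq> 5 \<Longrightarrow> e mod 10 \<noteq> 6 \<Longrightarrow> e mod 10 \<noteq> 7 \<Longrightarrow>
        e mod 10 \<noteq> 8 \<Longrightarrow> (e div 10, e) \<in> measure id"
    using lt[of e] by simp
qed

definition Phi :: "nat \<Rightarrow> (nat \<Rightarrow> nat option) \<Rightarrow> nat \<Rightarrow> nat option" where
  "Phi e orc n = (if \<exists>v. ev orc (decode e) n v then Some (THE v. ev orc (decode e) n v) else None)"

definition pjoin :: "(nat \<Rightarrow> nat option) \<Rightarrow> (nat \<Rightarrow> nat option) \<Rightarrow> nat \<Rightarrow> nat option" where
  "pjoin \<phi> \<psi> m = (if even m then \<phi> (m div 2) else \<psi> (m div 2))"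

definition Bapp :: "(nat \<Rightarrow> nat option) \<Rightarrow> (nat \<Rightarrow> nat option) \<Rightarrow> nat \<Rightarrow> nat option" where
  "Bapp \<phi> \<psi> n = (case \<phi> 0 of None \<Rightarrow> None | Some e \<Rightarrow> Phi e (pjoin \<phi> \<psi>) n)"

definition charfn :: "nat set \<Rightarrow> nat \<Rightarrow> nat option" where
  "charfn X n = Some (if n \<in> X then 1 else 0)"

definition BX :: "nat set \<Rightarrow> (nat \<Rightarrow> nat option) set" where
  "BX X = {\<phi>. \<exists>e. \<phi> = Phi e (charfn X)}"

definition Dset :: "nat \<Rightarrow> nat set" where
  "Dset u = {k. odd (u div 2 ^ k)}"

definition Gapp :: "nat set \<Rightarrow> nat set \<Rightarrow> nat set" where
  "Gapp A B = {n. \<exists>u. prod_encode (n, u) \<in> A \<and> Dset u \<subseteq> B}"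

text \<open>Computably enumerable sets: domains of partial computable functions
  (computations with the nowhere-defined oracle).\<close>
definition ce :: "nat set \<Rightarrow> bool" where
  "ce A \<longleftrightarrow> (\<exists>e. A = {n. Phi e (\<lambda>_. None) n \<noteq> None})"

inductive_set GY :: "nat set \<Rightarrow> nat set set" for Y :: "nat set" where
  GY_base: "Y \<in> GY Y"
| GY_ce: "ce A \<Longrightarrow> A \<in> GY Y"
| GY_app: "A \<in> GY Y \<Longrightarrow> B \<in> GY Y \<Longrightarrow> Gapp A B \<in> GY Y"

definition sjoin :: "nat set \<Rightarrow> nat set \<Rightarrow> nat set" where
  "sjoin X Z = {2 * n | n. n \<in> X} \<union> {2 * n + 1 | n. n \<in> Z}"

end

theory Submission
  imports Defs
begin

text \<open>The embedding sends \<open>\<phi>\<close> to the set \<open>emb \<phi>\<close> of the graph codes \<open>\<langle>\<langle>x, y\<rangle>, 1\<rangle>\<close> with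
  \<open>\<phi> x = y\<close>, together with the codes \<open>\<langle>n, u\<rangle>\<close> (\<open>u \<noteq> 1\<close>) of the elements \<open>n\<close> of \<open>emb (\<phi> \<cdot> \<tau>)\<close>
  for every finite function \<open>\<tau>\<close> whose graph is coded by \<open>D\<^sub>u\<close>.  The graph codes make \<open>emb\<close>
  injective.  Application in \<open>\<B>\<close> is continuous: a finite part of \<open>\<phi> \<cdot> \<psi>\<close> only depends on finite
  parts of \<open>\<phi>\<close> and \<open>\<psi>\<close>.  Hence \<open>n \<in> emb (\<phi> \<cdot> \<psi>)\<close> iff \<open>\<langle>n, u\<rangle> \<in> emb \<phi>\<close> for some \<open>u\<close> with
  \<open>D\<^sub>u \<subseteq> emb \<psi>\<close>, which is application in \<open>\<G>\<close>.

  For \<open>\<phi> = \<Phi>\<^sub>e\<^sup>X\<close> continuity likewise gives \<open>emb \<phi> = A \<cdot> (X \<oplus> X\<^sup>c)\<close>, where \<open>A\<close> consists of the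
  \<open>\<langle>m, u\<rangle>\<close> with \<open>m \<in> emb (\<Phi>\<^sub>e\<^sup>\<sigma>)\<close> for the finite part \<open>\<sigma>\<close> of the characteristic function of \<open>X\<close>
  recorded by \<open>D\<^sub>u\<close>.  The set \<open>A\<close> is c.e.: it is the set of conclusions of a system of inference
  rules with decidable instances (for the computation relation, for finite tables of values and
  for membership in the embedding), and every set generated by such rules is c.e., by a search
  for coded derivations.\<close>

abbreviation pair :: "nat \<Rightarrow> nat \<Rightarrow> nat" where "pair a b \<equiv> prod_encode (a, b)"
abbreviation pfst :: "nat \<Rightarrow> nat" where "pfst n \<equiv> fst (prod_decode n)"
abbreviation psnd :: "nat \<Rightarrow> nat" where "psnd n \<equiv> snd (prod_decode n)"

lemma pair_eq_0_iff [simp]: "pair a b = 0 \<longleftrightarrow> a = 0 \<and> b = 0"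
proof -
  have "pair 0 0 = 0" by (simp add: prod_encode_def)
  then show ?thesis by (metis prod_encode_eq prod.inject)
qed

lemma pfst_less: "m \<noteq> 0 \<Longrightarrow> pfst m < m"
proof -
  assume "m \<noteq> 0"
  obtain a b where m: "m = pair a b" by (metis prod_decode_inverse prod.collapse)
  with \<open>m \<noteq> 0\<close> have "0 < triangle (a + b)" by (cases "a + b") auto
  then have "a < pair a b" by (simp add: prod_encode_def)
  then show ?thesis using m by simp
qed

declare decode.simps [simp del]

lemma ev_deterministic: "ev orc p x y \<Longrightarrow> ev orc p x y' \<Longrightarrow> y = y'"
proof (induction arbitrary: y' rule: ev.induct)
  case (ev_query x v)
  from ev_query.prems ev_query.hyps show ?case by (cases rule: ev.cases) auto
next
  case (ev_pair f x a g b)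
  from ev_pair.prems show ?case by (cases rule: ev.cases) (auto dest: ev_pair.IH)
next
  case (ev_comp g x y f z)
  from ev_comp.prems show ?case by (cases rule: ev.cases) (metis ev_comp.IH)
next
  case (ev_prec0 f y v g)
  from ev_prec0.prems show ?case by (cases rule: ev.cases) (auto dest: ev_prec0.IH)
next
  case (ev_precS f g n y v w)
  from ev_precS.prems show ?case
  proof (cases rule: ev.cases)
    case (ev_precS n' y'' v')
    then show ?thesis using ev_precS.IH by auto
  qed simp
next
  case (ev_mu f y x)
  from ev_mu.prems show ?case
  proof (cases rule: ev.cases)
    case ev_mu
    show ?thesis
    proof (rule ccontr)
      assume "y \<noteq> y'"
      then consider "y < y'" | "y' < y" by linarith
      then show False
      proof cases
        case 1
        with ev_mu obtain v where "v \<noteq> 0" "ev orc f (pair y x) v" by blast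
        with ev_mu.IH(1) show False by auto
      next
        case 2
        with ev_mu.IH(2) obtain v where "v \<noteq> 0" "\<And>z. ev orc f (pair y' x) z \<Longrightarrow> v = z" by blast
        with ev_mu show False by auto
      qed
    qed
  qed
qed (erule ev.cases; simp)+

lemma ev_mono: "ev orc p x y \<Longrightarrow> orc \<subseteq>\<^sub>m orc' \<Longrightarrow> ev orc' p x y"
proof (induction rule: ev.induct)
  case (ev_query x v)
  then show ?case by (auto intro: ev.intros simp: map_le_def dom_def)
next
  case (ev_mu f y x)
  then show ?case by (auto intro!: ev.ev_mu)
qed (auto intro: ev.intros)

lemma restrict_map_mono: "A \<subseteq> B \<Longrightarrow> f |` A \<subseteq>\<^sub>m f |` B"
  by (auto simp: map_le_def restrict_map_def)

lemma restrict_map_le: "f |` A \<subseteq>\<^sub>m f"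
  by (auto simp: map_le_def restrict_map_def)

lemma finite_common_witness:
  assumes "finite I"
    and "\<forall>i\<in>I. \<exists>D. finite D \<and> P i D"
    and "\<And>i D D'. i \<in> I \<Longrightarrow> P i D \<Longrightarrow> D \<subseteq> D' \<Longrightarrow> P i D'"
  shows "\<exists>D. finite D \<and> (\<forall>i\<in>I. P i D)"
proof -
  from bchoice[OF assms(2)] obtain Dof where Dof: "\<forall>i\<in>I. finite (Dof i) \<and> P i (Dof i)" ..
  have "P i (\<Union>i\<in>I. Dof i)" if "i \<in> I" for i
    using Dof assms(3) that by blast
  with Dof assms(1) show ?thesis by (intro exI[of _ "\<Union>i\<in>I. Dof i"]) auto
qed

lemma ev_finite_use: "ev orc p x y \<Longrightarrow> \<exists>D. finite D \<and> ev (orc |` D) p x y"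
proof (induction rule: ev.induct)
  case (ev_query x v)
  then show ?case by (intro exI[of _ "{x}"]) (auto intro: ev.ev_query)
next
  case (ev_pair f x a g b)
  then obtain D1 D2 where "finite D1" "finite D2" "ev (orc |` D1) f x a" "ev (orc |` D2) g x b"
    by blast
  then show ?case
    by (intro exI[of _ "D1 \<union> D2"]) (blast intro: ev.ev_pair ev_mono restrict_map_mono)
next
  case (ev_comp g x y f z)
  then obtain D1 D2 where "finite D1" "finite D2" "ev (orc |` D1) g x y" "ev (orc |` D2) f y z"
    by blast
  then show ?case
    by (intro exI[of _ "D1 \<union> D2"]) (blast intro: ev.ev_comp ev_mono restrict_map_mono)
next
  case (ev_precS f g n y v w)
  then obtain D1 D2 where "finite D1" "finite D2"
    "ev (orc |` D1) (Prec f g) (pair n y) v" "ev (orc |` D2) g (pair n (pair v y)) w"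
    by blast
  then show ?case
    by (intro exI[of _ "D1 \<union> D2"]) (blast intro: ev.ev_precS ev_mono restrict_map_mono)
next
  case (ev_mu f y x)
  from ev_mu.IH(1) obtain D0 where D0: "finite D0" "ev (orc |` D0) f (pair y x) 0" by blast
  have "\<exists>D. finite D \<and> (\<forall>i\<in>{..<y}. \<exists>v. v \<noteq> 0 \<and> ev (orc |` D) f (pair i x) v)"
  proof (rule finite_common_witness)
    show "\<forall>i\<in>{..<y}. \<exists>D. finite D \<and> (\<exists>v. v \<noteq> 0 \<and> ev (orc |` D) f (pair i x) v)"
      using ev_mu.IH(2) by blast
  qed (blast intro: ev_mono restrict_map_mono)+
  then obtain D where D: "finite D" "\<forall>i<y. \<exists>v. v \<noteq> 0 \<and> ev (orc |` D) f (pair i x) v"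
    by auto
  have "ev (orc |` (D0 \<union> D)) (Mu f) x y"
  proof (rule ev.ev_mu)
    show "ev (orc |` (D0 \<union> D)) f (pair y x) 0"
      using D0(2) by (rule ev_mono) (simp add: restrict_map_mono)
    show "\<forall>i<y. \<exists>v. v \<noteq> 0 \<and> ev (orc |` (D0 \<union> D)) f (pair i x) v"
      using D(2) by (meson ev_mono restrict_map_mono sup_ge2)
  qed
  with D0(1) D(1) show ?case by blast
qed (meson ev.intros finite.emptyI)+

lemma map_le_SomeI: "(\<And>x y. f x = Some y \<Longrightarrow> g x = Some y) \<Longrightarrow> f \<subseteq>\<^sub>m g"
  by (force simp: map_le_def)

lemma map_le_SomeD: "f \<subseteq>\<^sub>m g \<Longrightarrow> f x = Some y \<Longrightarrow> g x = Some y"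
  by (force simp: map_le_def)

lemma Phi_eq_Some_iff: "Phi e orc n = Some y \<longleftrightarrow> ev orc (decode e) n y"
proof -
  have "(THE v. ev orc (decode e) n v) = y" if "ev orc (decode e) n y" for y
    using that by (blast intro: ev_deterministic)
  then show ?thesis by (auto simp: Phi_def)
qed

lemma Phi_mono: "orc \<subseteq>\<^sub>m orc' \<Longrightarrow> Phi e orc \<subseteq>\<^sub>m Phi e orc'"
  by (rule map_le_SomeI) (simp add: Phi_eq_Some_iff ev_mono)

lemma Phi_compact:
  assumes "finite D"
  shows "\<exists>D'. finite D' \<and> Phi e orc |` D \<subseteq>\<^sub>m Phi e (orc |` D')"
proof -
  have "\<exists>D'. finite D' \<and> (\<forall>x\<in>D \<inter> dom (Phi e orc). Phi e (orc |` D') x = Phi e orc x)"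
  proof (rule finite_common_witness)
    show "\<forall>x\<in>D \<inter> dom (Phi e orc). \<exists>D'. finite D' \<and> Phi e (orc |` D') x = Phi e orc x"
    proof
      fix x assume "x \<in> D \<inter> dom (Phi e orc)"
      then obtain y where y: "Phi e orc x = Some y" by blast
      then have "ev orc (decode e) x y" by (simp add: Phi_eq_Some_iff)
      then obtain D' where D': "finite D'" "ev (orc |` D') (decode e) x y" using ev_finite_use by blast
      from D'(2) have "Phi e (orc |` D') x = Some y" by (simp add: Phi_eq_Some_iff)
      with D'(1) y show "\<exists>D'. finite D' \<and> Phi e (orc |` D') x = Phi e orc x" by auto
    qed
    show "Phi e (orc |` D2) x = Phi e orc x"
      if "x \<in> D \<inter> dom (Phi e orc)" "Phi e (orc |` D1) x = Phi e orc x" "D1 \<subseteq> D2" for x D1 D2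
    proof -
      from that(1) obtain y where y: "Phi e orc x = Some y" by blast
      with that(2) have "Phi e (orc |` D1) x = Some y" by simp
      with y show ?thesis using map_le_SomeD[OF Phi_mono[OF restrict_map_mono[OF that(3)]]] by simp
    qed
  qed (use assms finite_Int in blast)
  then obtain D' where "finite D'" "\<forall>x\<in>D \<inter> dom (Phi e orc). Phi e (orc |` D') x = Phi e orc x"
    by blast
  then show ?thesis by (intro exI[of _ D']) (auto simp: map_le_def)
qed

lemma Bapp_eq_Some_iff: "Bapp \<phi> \<psi> n = Some y \<longleftrightarrow> (\<exists>e. \<phi> 0 = Some e \<and> ev (pjoin \<phi> \<psi>) (decode e) n y)"
  unfolding Bapp_def by (auto simp: Phi_eq_Some_iff split: option.splits)

lemma Bapp_None: "\<phi> 0 = None \<Longrightarrow> Bapp \<phi> \<psi> = Map.empty"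
  by (auto simp: Bapp_def)

lemma Bapp_Some: "\<phi> 0 = Some e \<Longrightarrow> Bapp \<phi> \<psi> = Phi e (pjoin \<phi> \<psi>)"
  by (auto simp: Bapp_def)

lemma pjoin_mono: "\<phi> \<subseteq>\<^sub>m \<phi>' \<Longrightarrow> \<psi> \<subseteq>\<^sub>m \<psi>' \<Longrightarrow> pjoin \<phi> \<psi> \<subseteq>\<^sub>m pjoin \<phi>' \<psi>'"
  unfolding map_le_def pjoin_def by (auto simp: dom_def)

lemma Bapp_mono: "\<phi> \<subseteq>\<^sub>m \<phi>' \<Longrightarrow> \<psi> \<subseteq>\<^sub>m \<psi>' \<Longrightarrow> Bapp \<phi> \<psi> \<subseteq>\<^sub>m Bapp \<phi>' \<psi>'"
  by (rule map_le_SomeI) (auto simp: Bapp_eq_Some_iff dest: map_le_SomeD intro: ev_mono pjoin_mono)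

lemma Bapp_compact:
  assumes "finite D"
  shows "\<exists>D'. finite D' \<and> Bapp \<phi> \<psi> |` D \<subseteq>\<^sub>m Bapp (\<phi> |` D') (\<psi> |` D')"
proof (cases "\<phi> 0")
  case None
  then show ?thesis by (intro exI[of _ "{}"]) (simp add: Bapp_None)
next
  case (Some e)
  obtain D0 where D0: "finite D0" "Phi e (pjoin \<phi> \<psi>) |` D \<subseteq>\<^sub>m Phi e (pjoin \<phi> \<psi> |` D0)"
    using Phi_compact[OF assms] by blast
  define D' where "D' = insert 0 ((\<lambda>k. k div 2) ` D0)"
  have "pjoin \<phi> \<psi> |` D0 \<subseteq>\<^sub>m pjoin (\<phi> |` D') (\<psi> |` D')"
    by (auto simp: map_le_def pjoin_def D'_def)
  with D0(2) have "Bapp \<phi> \<psi> |` D \<subseteq>\<^sub>m Phi e (pjoin (\<phi> |` D') (\<psi> |` D'))"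
    using Some by (simp add: Bapp_Some) (blast intro: map_le_trans Phi_mono)
  moreover have "(\<phi> |` D') 0 = Some e" using Some by (simp add: D'_def)
  ultimately show ?thesis using D0(1) by (intro exI[of _ D']) (simp add: D'_def Bapp_Some)
qed

section \<open>Finite partial functions as numbers\<close>

lemma Dset_eq_set_decode: "Dset = set_decode"
  by (simp add: fun_eq_iff Dset_def set_decode_def)

lemma Dset_less: "k \<in> Dset u \<Longrightarrow> k < u"
proof -
  assume "k \<in> Dset u"
  then have "0 < u div 2 ^ k" by (simp add: Dset_def) (metis odd_pos)
  then have "2 ^ k \<le> u" by (simp add: div_greater_zero_iff)
  then show ?thesis using less_exp[of k] by linarith
qed

definition graph_code :: "nat \<Rightarrow> nat \<Rightarrow> nat" where
  "graph_code x y = pair (pair x y) 1"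

lemma graph_code_inject [simp]: "graph_code x y = graph_code x' y' \<longleftrightarrow> x = x' \<and> y = y'"
  by (simp add: graph_code_def)

lemma graph_code_neq_0 [simp]: "graph_code x y \<noteq> 0"
  by (simp add: graph_code_def)

text \<open>Taking the least value makes every \<open>u\<close> code a partial function, even when
  \<open>D\<^sub>u\<close> contains several graph codes with the same argument.\<close>

definition code_map :: "nat \<Rightarrow> nat \<Rightarrow> nat option" where
  "code_map u x = (if \<exists>v. graph_code x v \<in> Dset u
                   then Some (LEAST v. graph_code x v \<in> Dset u) else None)"

lemma code_map_eq_Some_iff:
  "code_map u x = Some v \<longleftrightarrow> graph_code x v \<in> Dset u \<and> (\<forall>w<v. graph_code x w \<notin> Dset u)"
proof
  assume "code_map u x = Some v"
  then show "graph_code x v \<in> Dset u \<and> (\<forall>w<v. graph_code x w \<notin> Dset u)"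
    by (auto simp: code_map_def split: if_splits intro: LeastI dest: not_less_Least)
next
  assume "graph_code x v \<in> Dset u \<and> (\<forall>w<v. graph_code x w \<notin> Dset u)"
  then show "code_map u x = Some v"
    unfolding code_map_def by (auto intro!: Least_equality simp: not_less[symmetric])
qed

lemma code_map_le:
  "(\<And>x y. graph_code x y \<in> Dset u \<Longrightarrow> \<sigma> x = Some y) \<Longrightarrow> code_map u \<subseteq>\<^sub>m \<sigma>"
  by (rule map_le_SomeI) (simp add: code_map_eq_Some_iff)

definition map_code :: "(nat \<Rightarrow> nat option) \<Rightarrow> nat" where
  "map_code \<sigma> = set_encode {graph_code x y | x y. \<sigma> x = Some y}"

lemma Dset_map_code:
  assumes "finite (dom \<sigma>)"
  shows "Dset (map_code \<sigma>) = {graph_code x y | x y. \<sigma> x = Some y}"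
proof -
  have "{graph_code x y | x y. \<sigma> x = Some y} \<subseteq> (\<lambda>x. graph_code x (the (\<sigma> x))) ` dom \<sigma>"
    by force
  with assms have "finite {graph_code x y | x y. \<sigma> x = Some y}" by (meson finite_imageI finite_subset)
  then show ?thesis by (simp add: map_code_def Dset_eq_set_decode)
qed

lemma code_map_map_code [simp]: "finite (dom \<sigma>) \<Longrightarrow> code_map (map_code \<sigma>) = \<sigma>"
  by (rule ext) (auto simp: code_map_def Dset_map_code intro: Least_equality)

lemma map_code_neq_1: "finite (dom \<sigma>) \<Longrightarrow> map_code \<sigma> \<noteq> 1"
proof
  assume "finite (dom \<sigma>)" "map_code \<sigma> = 1"
  then have "0 \<in> Dset (map_code \<sigma>)" by (simp add: Dset_eq_set_decode)
  with Dset_map_code[OF \<open>finite (dom \<sigma>)\<close>] show False by auto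
qed

section \<open>The embedding\<close>

inductive emb_mem :: "(nat \<Rightarrow> nat option) \<Rightarrow> nat \<Rightarrow> bool" where
  emb_graph: "\<phi> x = Some y \<Longrightarrow> emb_mem \<phi> (graph_code x y)"
| emb_app: "u \<noteq> 1 \<Longrightarrow> emb_mem (Bapp \<phi> (code_map u)) n \<Longrightarrow> emb_mem \<phi> (pair n u)"

definition emb :: "(nat \<Rightarrow> nat option) \<Rightarrow> nat set" where
  "emb \<phi> = {m. emb_mem \<phi> m}"

lemma emb_mem_mono: "emb_mem \<phi> m \<Longrightarrow> \<phi> \<subseteq>\<^sub>m \<phi>' \<Longrightarrow> emb_mem \<phi>' m"
proof (induction arbitrary: \<phi>' rule: emb_mem.induct)
  case (emb_graph \<phi> x y)
  then show ?case by (blast intro: emb_mem.emb_graph map_le_SomeD)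
next
  case (emb_app u \<phi> n)
  then show ?case by (blast intro: emb_mem.emb_app Bapp_mono map_le_refl)
qed

lemma emb_mem_nonzero: "emb_mem \<phi> m \<Longrightarrow> m \<noteq> 0"
  by (induction rule: emb_mem.induct) simp_all

lemma emb_mem_graph_code_iff [simp]: "emb_mem \<phi> (graph_code x y) \<longleftrightarrow> \<phi> x = Some y"
proof
  assume "emb_mem \<phi> (graph_code x y)"
  then show "\<phi> x = Some y"
    by (cases rule: emb_mem.cases) (simp_all add: graph_code_def)
qed (rule emb_graph)

lemma emb_mem_pair_iff:
  assumes "u \<noteq> 1"
  shows "emb_mem \<phi> (pair n u) \<longleftrightarrow> emb_mem (Bapp \<phi> (code_map u)) n"
proof
  assume "emb_mem \<phi> (pair n u)"
  then show "emb_mem (Bapp \<phi> (code_map u)) n"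
    using assms by (cases rule: emb_mem.cases) (simp_all add: graph_code_def)
qed (rule emb_app[OF assms])

lemma emb_mem_compact: "emb_mem \<phi> m \<Longrightarrow> \<exists>D. finite D \<and> emb_mem (\<phi> |` D) m"
proof (induction rule: emb_mem.induct)
  case (emb_graph \<phi> x y)
  then show ?case by (intro exI[of _ "{x}"]) (simp add: emb_mem.emb_graph)
next
  case (emb_app u \<phi> n)
  then obtain D where "finite D" "emb_mem (Bapp \<phi> (code_map u) |` D) n" by blast
  moreover obtain D' where "finite D'"
    "Bapp \<phi> (code_map u) |` D \<subseteq>\<^sub>m Bapp (\<phi> |` D') (code_map u |` D')"
    using Bapp_compact \<open>finite D\<close> by blast
  ultimately have "emb_mem (Bapp (\<phi> |` D') (code_map u)) n"
    by (meson emb_mem_mono Bapp_mono map_le_refl map_le_trans restrict_map_le)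
  with emb_app.hyps(1) \<open>finite D'\<close> show ?case by (blast intro: emb_mem.emb_app)
qed

theorem inj_emb: "inj emb"
proof (rule injI)
  fix \<phi> \<psi> assume "emb \<phi> = emb \<psi>"
  then have "\<phi> x = Some y \<longleftrightarrow> \<psi> x = Some y" for x y
    by (metis emb_def emb_mem_graph_code_iff mem_Collect_eq)
  then show "\<phi> = \<psi>" by (metis option.exhaust ext)
qed

theorem emb_Bapp: "emb (Bapp \<phi> \<psi>) = Gapp (emb \<phi>) (emb \<psi>)"
proof (intro set_eqI iffI)
  fix n assume "n \<in> emb (Bapp \<phi> \<psi>)"
  then obtain D where "finite D" "emb_mem (Bapp \<phi> \<psi> |` D) n"
    using emb_mem_compact by (auto simp: emb_def)
  moreover obtain D' where D': "finite D'" "Bapp \<phi> \<psi> |` D \<subseteq>\<^sub>m Bapp (\<phi> |` D') (\<psi> |` D')"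
    using Bapp_compact \<open>finite D\<close> by blast
  moreover define \<tau> where "\<tau> = \<psi> |` D'"
  ultimately have "emb_mem (Bapp \<phi> \<tau>) n"
    by (meson emb_mem_mono Bapp_mono map_le_refl map_le_trans restrict_map_le)
  moreover have fin: "finite (dom \<tau>)" using D'(1) by (simp add: \<tau>_def)
  ultimately have "pair n (map_code \<tau>) \<in> emb \<phi>"
    using emb_app[OF map_code_neq_1, of \<tau> \<phi> n] by (simp add: emb_def)
  moreover have "Dset (map_code \<tau>) \<subseteq> emb \<psi>"
    using fin by (auto simp: emb_def Dset_map_code \<tau>_def restrict_map_def split: if_splits)
  ultimately show "n \<in> Gapp (emb \<phi>) (emb \<psi>)" unfolding Gapp_def by blast
next
  fix n assume "n \<in> Gapp (emb \<phi>) (emb \<psi>)"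
  then obtain u where u: "pair n u \<in> emb \<phi>" "Dset u \<subseteq> emb \<psi>" unfolding Gapp_def by blast
  have "u \<noteq> 1"
  proof
    assume "u = 1"
    then have "0 \<in> emb \<psi>" using u(2) by (auto simp: Dset_eq_set_decode)
    then show False using emb_mem_nonzero by (auto simp: emb_def)
  qed
  with u(1) have "emb_mem (Bapp \<phi> (code_map u)) n" by (simp add: emb_def emb_mem_pair_iff)
  moreover have "code_map u \<subseteq>\<^sub>m \<psi>"
    using u(2) by (intro code_map_le) (auto simp: emb_def)
  ultimately show "n \<in> emb (Bapp \<phi> \<psi>)"
    unfolding emb_def by (blast intro: emb_mem_mono Bapp_mono map_le_refl)
qed

section \<open>Total computable functions\<close>

lemma ev_Zero_iff: "ev orc Zero x y \<longleftrightarrow> y = 0"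
  by (auto elim: ev.cases intro: ev.ev_zero)

lemma ev_Succ_iff: "ev orc Succ x y \<longleftrightarrow> y = Suc x"
  by (auto elim: ev.cases intro: ev.ev_succ)

lemma ev_Ident_iff: "ev orc Ident x y \<longleftrightarrow> y = x"
  by (auto elim: ev.cases intro: ev.ev_ident)

lemma ev_Fst_iff: "ev orc Fst x y \<longleftrightarrow> y = pfst x"
  by (auto elim: ev.cases intro: ev.ev_fst)

lemma ev_Snd_iff: "ev orc Snd x y \<longleftrightarrow> y = psnd x"
  by (auto elim: ev.cases intro: ev.ev_snd)

lemma ev_Comp_iff: "ev orc (Comp f g) x z \<longleftrightarrow> (\<exists>y. ev orc g x y \<and> ev orc f y z)"
  by (auto elim: ev.cases intro: ev.ev_comp)

lemma ev_PairP_iff: "ev orc (PairP f g) x z \<longleftrightarrow> (\<exists>a b. z = pair a b \<and> ev orc f x a \<and> ev orc g x b)"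
  by (auto elim: ev.cases intro: ev.ev_pair)

lemma ev_Prec_0_iff: "ev orc (Prec f g) (pair 0 y) v \<longleftrightarrow> ev orc f y v"
  by (auto elim: ev.cases intro: ev.ev_prec0)

lemma ev_Prec_Suc_iff:
  "ev orc (Prec f g) (pair (Suc n) y) w \<longleftrightarrow>
   (\<exists>v. ev orc (Prec f g) (pair n y) v \<and> ev orc g (pair n (pair v y)) w)"
proof
  assume "ev orc (Prec f g) (pair (Suc n) y) w"
  then show "\<exists>v. ev orc (Prec f g) (pair n y) v \<and> ev orc g (pair n (pair v y)) w"
    by (cases rule: ev.cases) auto
qed (auto intro: ev.ev_precS)

lemma ev_Mu_iff:
  "ev orc (Mu f) x y \<longleftrightarrow> ev orc f (pair y x) 0 \<and> (\<forall>i<y. \<exists>v. v \<noteq> 0 \<and> ev orc f (pair i x) v)"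
  by (auto elim: ev.cases intro: ev.ev_mu)

text \<open>Quantifying over all oracles, the nowhere defined one included, makes programs for total
  functions query-free, so they can be run relative to any oracle.\<close>

definition computes :: "prog \<Rightarrow> (nat \<Rightarrow> nat) \<Rightarrow> bool" where
  "computes p F \<longleftrightarrow> (\<forall>orc x y. ev orc p x y \<longleftrightarrow> y = F x)"

definition computable :: "(nat \<Rightarrow> nat) \<Rightarrow> bool" where
  "computable F \<longleftrightarrow> (\<exists>p. computes p F)"

definition decidable :: "(nat \<Rightarrow> bool) \<Rightarrow> bool" where
  "decidable P \<longleftrightarrow> computable (\<lambda>x. if P x then 0 else 1)"

lemma computable_id: "computable (\<lambda>x. x)"
  unfolding computable_def computes_def by (rule exI[of _ Ident]) (simp add: ev_Ident_iff)

lemma computable_comp: "computable F \<Longrightarrow> computable G \<Longrightarrow> computable (\<lambda>x. F (G x))"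
  unfolding computable_def computes_def by (metis ev_Comp_iff)

lemma computable_Suc: "computable G \<Longrightarrow> computable (\<lambda>x. Suc (G x))"
proof -
  have "computable Suc"
    unfolding computable_def computes_def by (rule exI[of _ Succ]) (simp add: ev_Succ_iff)
  then show "computable G \<Longrightarrow> computable (\<lambda>x. Suc (G x))" by (rule computable_comp)
qed

lemma computable_const: "computable (\<lambda>x. c)"
proof (induction c)
  case 0
  show ?case unfolding computable_def computes_def by (rule exI[of _ Zero]) (simp add: ev_Zero_iff)
next
  case (Suc c)
  then show ?case by (rule computable_Suc)
qed

lemma computable_pfst: "computable G \<Longrightarrow> computable (\<lambda>x. pfst (G x))"
proof -
  have "computable pfst"
    unfolding computable_def computes_def by (rule exI[of _ Fst]) (simp add: ev_Fst_iff)
  then show "computable G \<Longrightarrow> computable (\<lambda>x. pfst (G x))" by (rule computable_comp)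
qed

lemma computable_psnd: "computable G \<Longrightarrow> computable (\<lambda>x. psnd (G x))"
proof -
  have "computable psnd"
    unfolding computable_def computes_def by (rule exI[of _ Snd]) (simp add: ev_Snd_iff)
  then show "computable G \<Longrightarrow> computable (\<lambda>x. psnd (G x))" by (rule computable_comp)
qed

lemma computable_pair: "computable G \<Longrightarrow> computable H \<Longrightarrow> computable (\<lambda>x. pair (G x) (H x))"
  unfolding computable_def computes_def
proof (elim exE)
  fix p q assume "\<forall>orc x y. ev orc p x y = (y = G x)" "\<forall>orc x y. ev orc q x y = (y = H x)"
  then show "\<exists>r. \<forall>orc x y. ev orc r x y = (y = pair (G x) (H x))"
    by (intro exI[of _ "PairP p q"]) (simp add: ev_PairP_iff)
qed

lemma computable_comp2:
  "computable (\<lambda>z. H (pfst z) (psnd z)) \<Longrightarrow> computable A \<Longrightarrow> computable B \<Longrightarrow>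
   computable (\<lambda>x. H (A x) (B x))"
  using computable_comp[of "\<lambda>z. H (pfst z) (psnd z)" "\<lambda>x. pair (A x) (B x)"] computable_pair
  by simp

lemma computable_cong: "computable F \<Longrightarrow> (\<And>x. F x = G x) \<Longrightarrow> computable G"
  by (metis ext)

lemma decidable_cong: "decidable P \<Longrightarrow> (\<And>x. P x \<longleftrightarrow> Q x) \<Longrightarrow> decidable Q"
proof -
  assume "decidable P" "\<And>x. P x \<longleftrightarrow> Q x"
  then have "P = Q" by blast
  with \<open>decidable P\<close> show "decidable Q" by simp
qed

text \<open>The step function of \<open>prim_rec F G\<close> receives the triple \<open>\<langle>n, \<langle>previous value, y\<rangle>\<rangle>\<close>,
  matching the semantics of \<open>Prec\<close>.\<close>

fun prim_rec :: "(nat \<Rightarrow> nat) \<Rightarrow> (nat \<Rightarrow> nat) \<Rightarrow> nat \<Rightarrow> nat \<Rightarrow> nat" where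
  "prim_rec F G 0 y = F y"
| "prim_rec F G (Suc n) y = G (pair n (pair (prim_rec F G n y) y))"

lemma computes_Prec:
  assumes F: "computes p F" and G: "computes q G"
  shows "computes (Prec p q) (\<lambda>z. prim_rec F G (pfst z) (psnd z))"
proof -
  have "ev orc (Prec p q) (pair n y) v \<longleftrightarrow> v = prim_rec F G n y" for orc n y v
    using F G by (induction n arbitrary: v) (simp_all add: computes_def ev_Prec_0_iff ev_Prec_Suc_iff)
  then show ?thesis unfolding computes_def by (metis prod.collapse prod_decode_inverse)
qed

lemma computable_prim_rec:
  assumes "computable F" "computable G" "computable N" "computable Y"
  shows "computable (\<lambda>x. prim_rec F G (N x) (Y x))"
proof (rule computable_comp2[OF _ assms(3,4)])
  show "computable (\<lambda>z. prim_rec F G (pfst z) (psnd z))"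
    using assms(1,2) computes_Prec unfolding computable_def by blast
qed

lemma computes_Mu:
  assumes F: "computes p F" and total: "\<forall>x. \<exists>y. F (pair y x) = 0"
  shows "computes (Mu p) (\<lambda>x. LEAST y. F (pair y x) = 0)"
  unfolding computes_def
proof (intro allI)
  fix orc x y
  have "ev orc (Mu p) x y \<longleftrightarrow> F (pair y x) = 0 \<and> (\<forall>i<y. F (pair i x) \<noteq> 0)"
    using F by (auto simp: ev_Mu_iff computes_def)
  also have "\<dots> \<longleftrightarrow> y = (LEAST y. F (pair y x) = 0)"
  proof
    assume "F (pair y x) = 0 \<and> (\<forall>i<y. F (pair i x) \<noteq> 0)"
    then show "y = (LEAST y. F (pair y x) = 0)"
      by (intro Least_equality[symmetric]) (auto simp: not_less[symmetric])
  next
    assume "y = (LEAST y. F (pair y x) = 0)"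
    moreover from total obtain y0 where "F (pair y0 x) = 0" by blast
    ultimately show "F (pair y x) = 0 \<and> (\<forall>i<y. F (pair i x) \<noteq> 0)"
      by (metis (mono_tags, lifting) LeastI not_less_Least)
  qed
  finally show "ev orc (Mu p) x y \<longleftrightarrow> y = (LEAST y. F (pair y x) = 0)" .
qed

lemma computable_Least:
  "computable F \<Longrightarrow> \<forall>x. \<exists>y. F (pair y x) = 0 \<Longrightarrow> computable (\<lambda>x. LEAST y. F (pair y x) = 0)"
  unfolding computable_def using computes_Mu by blast

lemma computable_add: "computable A \<Longrightarrow> computable B \<Longrightarrow> computable (\<lambda>x. A x + B x)"
proof -
  have "prim_rec (\<lambda>y. y) (\<lambda>w. Suc (pfst (psnd w))) n y = n + y" for n y
    by (induction n) auto
  moreover assume "computable A" "computable B"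
  then have "computable (\<lambda>x. prim_rec (\<lambda>y. y) (\<lambda>w. Suc (pfst (psnd w))) (A x) (B x))"
    by (intro computable_prim_rec computable_id computable_Suc computable_pfst computable_psnd)
  ultimately show ?thesis by simp
qed

lemma computable_mult: "computable A \<Longrightarrow> computable B \<Longrightarrow> computable (\<lambda>x. A x * B x)"
proof -
  have "prim_rec (\<lambda>y. 0) (\<lambda>w. pfst (psnd w) + psnd (psnd w)) n y = n * y" for n y
    by (induction n) auto
  moreover assume "computable A" "computable B"
  then have "computable (\<lambda>x. prim_rec (\<lambda>y. 0) (\<lambda>w. pfst (psnd w) + psnd (psnd w)) (A x) (B x))"
    by (intro computable_prim_rec computable_const computable_add computable_id
        computable_pfst computable_psnd)
  ultimately show ?thesis by simp
qed

lemma computable_pred: "computable A \<Longrightarrow> computable (\<lambda>x. A x - 1)"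
proof -
  have "prim_rec (\<lambda>y. 0) (\<lambda>w. pfst w) n y = n - 1" for n y
    by (induction n) auto
  moreover assume "computable A"
  then have "computable (\<lambda>x. prim_rec (\<lambda>y. 0) (\<lambda>w. pfst w) (A x) 0)"
    by (intro computable_prim_rec computable_const computable_pfst computable_id)
  ultimately show ?thesis by simp
qed

lemma computable_diff: "computable A \<Longrightarrow> computable B \<Longrightarrow> computable (\<lambda>x. A x - B x)"
proof -
  have "prim_rec (\<lambda>y. y) (\<lambda>w. pfst (psnd w) - 1) n y = y - n" for n y
    by (induction n) auto
  moreover assume "computable A" "computable B"
  then have "computable (\<lambda>x. prim_rec (\<lambda>y. y) (\<lambda>w. pfst (psnd w) - 1) (B x) (A x))"
    by (intro computable_prim_rec computable_id computable_pred computable_pfst computable_psnd)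
  ultimately show ?thesis by simp
qed

lemma computable_if_zero:
  "computable C \<Longrightarrow> computable A \<Longrightarrow> computable B \<Longrightarrow> computable (\<lambda>x. if C x = 0 then A x else B x)"
proof -
  have "prim_rec pfst (\<lambda>w. psnd (psnd (psnd w))) n y = (if n = 0 then pfst y else psnd y)" for n y
    by (induction n) auto
  moreover assume "computable C" "computable A" "computable B"
  then have "computable (\<lambda>x. prim_rec pfst (\<lambda>w. psnd (psnd (psnd w))) (C x) (pair (A x) (B x)))"
    by (intro computable_prim_rec computable_id computable_pair computable_pfst computable_psnd)
  ultimately show ?thesis by (simp cong: if_cong)
qed

lemma computable_if:
  "decidable P \<Longrightarrow> computable A \<Longrightarrow> computable B \<Longrightarrow> computable (\<lambda>x. if P x then A x else B x)"
proof -
  assume "decidable P" "computable A" "computable B"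
  then have "computable (\<lambda>x. if (if P x then 0 else 1) = (0::nat) then A x else B x)"
    unfolding decidable_def by (rule computable_if_zero)
  then show ?thesis by (rule computable_cong) simp
qed

lemma decidable_const: "decidable (\<lambda>x. c)"
  unfolding decidable_def by (rule computable_const)

lemma decidable_eq: "computable A \<Longrightarrow> computable B \<Longrightarrow> decidable (\<lambda>x. A x = B x)"
proof -
  assume "computable A" "computable B"
  then have "computable (\<lambda>x. if (A x - B x) + (B x - A x) = 0 then 0 else 1)"
    by (intro computable_if_zero computable_add computable_diff computable_const)
  then show ?thesis unfolding decidable_def by (rule computable_cong) auto
qed

lemma decidable_le: "computable A \<Longrightarrow> computable B \<Longrightarrow> decidable (\<lambda>x. A x \<le> B x)"
proof -
  assume "computable A" "computable B"
  then have "computable (\<lambda>x. if A x - B x = 0 then 0 else 1)"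
    by (intro computable_if_zero computable_diff computable_const)
  then show ?thesis unfolding decidable_def by (rule computable_cong) auto
qed

lemma decidable_less: "computable A \<Longrightarrow> computable B \<Longrightarrow> decidable (\<lambda>x. A x < B x)"
  using decidable_le[OF computable_Suc] by (simp add: Suc_le_eq)

lemma decidable_not: "decidable P \<Longrightarrow> decidable (\<lambda>x. \<not> P x)"
proof -
  assume "decidable P"
  then have "computable (\<lambda>x. if P x then 1 else 0)" by (intro computable_if computable_const)
  then show ?thesis unfolding decidable_def by (rule computable_cong) auto
qed

lemma decidable_conj: "decidable P \<Longrightarrow> decidable Q \<Longrightarrow> decidable (\<lambda>x. P x \<and> Q x)"
proof -
  assume "decidable P" "decidable Q"
  then have "computable (\<lambda>x. if P x then (if Q x then 0 else 1) else 1)"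
    unfolding decidable_def[of Q] by (rule computable_if[OF _ _ computable_const])
  then show ?thesis unfolding decidable_def by (rule computable_cong) auto
qed

lemma decidable_disj: "decidable P \<Longrightarrow> decidable Q \<Longrightarrow> decidable (\<lambda>x. P x \<or> Q x)"
  using decidable_not[OF decidable_conj[OF decidable_not decidable_not]] by simp

lemma decidable_if:
  "decidable P \<Longrightarrow> decidable Q \<Longrightarrow> decidable R \<Longrightarrow> decidable (\<lambda>x. if P x then Q x else R x)"
proof -
  assume "decidable P" "decidable Q" "decidable R"
  then have "computable (\<lambda>x. if P x then (if Q x then 0 else 1) else (if R x then 0 else 1))"
    unfolding decidable_def[of Q] decidable_def[of R] by (rule computable_if)
  then show ?thesis unfolding decidable_def by (rule computable_cong) simp
qed

lemma decidable_comp2: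
  "decidable (\<lambda>z. P (pfst z) (psnd z)) \<Longrightarrow> computable A \<Longrightarrow> computable B \<Longrightarrow>
   decidable (\<lambda>x. P (A x) (B x))"
  unfolding decidable_def by (rule computable_comp2[where H = "\<lambda>a b. if P a b then 0 else 1"])

lemma decidable_comp: "decidable P \<Longrightarrow> computable G \<Longrightarrow> decidable (\<lambda>x. P (G x))"
  unfolding decidable_def by (rule computable_comp[where F = "\<lambda>y. if P y then 0 else 1"])

lemma decidable_ball:
  assumes "decidable (\<lambda>z. P (pfst z) (psnd z))" "computable B"
  shows "decidable (\<lambda>x. \<forall>i<B x. P i x)"
proof -
  let ?step = "\<lambda>w. if pfst (psnd w) = 0 \<and> P (pfst w) (psnd (psnd w)) then 0 else 1"
  have "prim_rec (\<lambda>y. 0) ?step n y = (if \<forall>i<n. P i y then 0 else 1)" for n y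
    by (induction n) (auto simp: less_Suc_eq)
  moreover have "decidable (\<lambda>w. P (pfst w) (psnd (psnd w)))"
    by (rule decidable_comp2[OF assms(1)]) (intro computable_pfst computable_psnd computable_id)+
  then have "computable (\<lambda>x. prim_rec (\<lambda>y. 0) ?step (B x) x)"
    using assms(2) by (intro computable_prim_rec computable_const computable_if decidable_conj
        decidable_eq computable_pfst computable_psnd computable_id)
  ultimately show ?thesis unfolding decidable_def by simp
qed

lemma decidable_bex:
  "decidable (\<lambda>z. P (pfst z) (psnd z)) \<Longrightarrow> computable B \<Longrightarrow> decidable (\<lambda>x. \<exists>i<B x. P i x)"
  using decidable_not[OF decidable_ball[where P = "\<lambda>i x. \<not> P i x"]] decidable_not by simp

lemma computable_div: "computable A \<Longrightarrow> computable B \<Longrightarrow> computable (\<lambda>x. A x div B x)"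
proof -
  let ?F = "\<lambda>w. if psnd (psnd w) = 0 \<or> pfst (psnd w) < psnd (psnd w) * Suc (pfst w) then 0 else 1::nat"
  have "computable ?F"
    by (intro computable_if decidable_disj decidable_eq decidable_less computable_mult computable_Suc
        computable_pfst computable_psnd computable_id computable_const)
  moreover have "\<forall>z. \<exists>q. ?F (pair q z) = 0"
  proof
    fix z
    show "\<exists>q. ?F (pair q z) = 0"
    proof (cases "psnd z = 0")
      case False
      then have "pfst z < psnd z * Suc (pfst z)" by (cases "psnd z") auto
      then show ?thesis by (intro exI[of _ "pfst z"]) simp
    qed simp
  qed
  ultimately have "computable (\<lambda>z. LEAST q. ?F (pair q z) = 0)" by (rule computable_Least)
  moreover have "(LEAST q. ?F (pair q z) = 0) = pfst z div psnd z" for z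
  proof (cases "psnd z = 0")
    case False
    have "(LEAST q. pfst z < psnd z * Suc q) = pfst z div psnd z"
    proof (rule Least_equality)
      have "pfst z = psnd z * (pfst z div psnd z) + pfst z mod psnd z" by simp
      moreover have "pfst z mod psnd z < psnd z" using False by simp
      ultimately show "pfst z < psnd z * Suc (pfst z div psnd z)" by (simp only: mult_Suc_right)
      show "pfst z div psnd z \<le> q" if "pfst z < psnd z * Suc q" for q
        using that by (metis less_mult_imp_div_less mult.commute less_Suc_eq_le)
    qed
    then show ?thesis using False by simp
  qed simp
  ultimately have "computable (\<lambda>z. pfst z div psnd z)" by simp
  then show "computable A \<Longrightarrow> computable B \<Longrightarrow> computable (\<lambda>x. A x div B x)"
    by (rule computable_comp2)
qed

lemma computable_mod: "computable A \<Longrightarrow> computable B \<Longrightarrow> computable (\<lambda>x. A x mod B x)"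
proof -
  assume "computable A" "computable B"
  then have "computable (\<lambda>x. A x - B x * (A x div B x))"
    by (intro computable_diff computable_mult computable_div)
  then show ?thesis by (simp add: minus_mult_div_eq_mod)
qed

lemma computable_power2: "computable A \<Longrightarrow> computable (\<lambda>x. 2 ^ A x)"
proof -
  have "prim_rec (\<lambda>y. 1) (\<lambda>w. pfst (psnd w) + pfst (psnd w)) n y = 2 ^ n" for n y
    by (induction n) auto
  moreover assume "computable A"
  then have "computable (\<lambda>x. prim_rec (\<lambda>y. 1) (\<lambda>w. pfst (psnd w) + pfst (psnd w)) (A x) 0)"
    by (intro computable_prim_rec computable_const computable_add computable_pfst computable_psnd
        computable_id)
  ultimately show ?thesis by simp
qed

lemma decidable_in_Dset: "computable K \<Longrightarrow> computable U \<Longrightarrow> decidable (\<lambda>x. K x \<in> Dset (U x))"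
proof -
  assume "computable K" "computable U"
  then have "decidable (\<lambda>x. \<not> (U x div 2 ^ K x) mod 2 = 0)"
    by (intro decidable_not decidable_eq computable_mod computable_div computable_power2
        computable_const)
  then show ?thesis by (rule decidable_cong) (simp add: Dset_def even_iff_mod_2_eq_zero)
qed

lemma decidable_even: "computable A \<Longrightarrow> decidable (\<lambda>x. even (A x))"
  using decidable_eq[OF computable_mod[OF _ computable_const] computable_const, of A 2 0]
  by (simp add: even_iff_mod_2_eq_zero)

lemma computable_funpow: "computable f \<Longrightarrow> computable J \<Longrightarrow> computable A \<Longrightarrow> computable (\<lambda>x. (f ^^ J x) (A x))"
proof -
  have "prim_rec (\<lambda>y. y) (\<lambda>w. f (pfst (psnd w))) n y = (f ^^ n) y" for n y
    by (induction n) auto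
  moreover assume "computable f" "computable J" "computable A"
  moreover from \<open>computable f\<close> have "computable (\<lambda>w. f (pfst (psnd w)))"
    by (rule computable_comp) (intro computable_pfst computable_psnd computable_id)
  ultimately have "computable (\<lambda>x. prim_rec (\<lambda>y. y) (\<lambda>w. f (pfst (psnd w))) (J x) (A x))"
    by (intro computable_prim_rec computable_id)
  then show ?thesis by (simp add: \<open>\<And>n y. prim_rec (\<lambda>y. y) (\<lambda>w. f (pfst (psnd w))) n y = (f ^^ n) y\<close>)
qed

lemmas computable_intros =
  computable_const computable_id computable_Suc computable_pfst computable_psnd computable_pair
  computable_add computable_diff computable_mult computable_div computable_mod computable_power2
  computable_funpow computable_if decidable_const decidable_eq decidable_le decidable_less
  decidable_not decidable_conj decidable_disj decidable_if decidable_ball decidable_bex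
  decidable_in_Dset decidable_even

section \<open>Computably enumerable sets\<close>

primrec encode_prog :: "prog \<Rightarrow> nat" where
  "encode_prog Zero = 0"
| "encode_prog Succ = 1"
| "encode_prog Ident = 2"
| "encode_prog Fst = 3"
| "encode_prog Snd = 4"
| "encode_prog Query = 5"
| "encode_prog (PairP p q) = 6 + 10 * pair (encode_prog p) (encode_prog q)"
| "encode_prog (Comp p q) = 7 + 10 * pair (encode_prog p) (encode_prog q)"
| "encode_prog (Prec p q) = 8 + 10 * pair (encode_prog p) (encode_prog q)"
| "encode_prog (Mu p) = 9 + 10 * encode_prog p"

lemma decode_encode_prog [simp]: "decode (encode_prog p) = p"
  by (induction p) (subst decode.simps; simp)+

lemma decode_eq_iffs:
  "decode c = Zero \<longleftrightarrow> c mod 10 = 0"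
  "decode c = Succ \<longleftrightarrow> c mod 10 = 1"
  "decode c = Ident \<longleftrightarrow> c mod 10 = 2"
  "decode c = Fst \<longleftrightarrow> c mod 10 = 3"
  "decode c = Snd \<longleftrightarrow> c mod 10 = 4"
  "decode c = Query \<longleftrightarrow> c mod 10 = 5"
  "decode c = PairP f g \<longleftrightarrow> c mod 10 = 6 \<and> decode (pfst (c div 10)) = f \<and> decode (psnd (c div 10)) = g"
  "decode c = Comp f g \<longleftrightarrow> c mod 10 = 7 \<and> decode (pfst (c div 10)) = f \<and> decode (psnd (c div 10)) = g"
  "decode c = Prec f g \<longleftrightarrow> c mod 10 = 8 \<and> decode (pfst (c div 10)) = f \<and> decode (psnd (c div 10)) = g"
  "decode c = Mu f \<longleftrightarrow> c mod 10 = 9 \<and> decode (c div 10) = f"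
proof -
  have "c mod 10 = 0 \<or> c mod 10 = 1 \<or> c mod 10 = 2 \<or> c mod 10 = 3 \<or> c mod 10 = 4 \<or>
        c mod 10 = 5 \<or> c mod 10 = 6 \<or> c mod 10 = 7 \<or> c mod 10 = 8 \<or> c mod 10 = 9"
    by presburger
  then show
    "decode c = Zero \<longleftrightarrow> c mod 10 = 0"
    "decode c = Succ \<longleftrightarrow> c mod 10 = 1"
    "decode c = Ident \<longleftrightarrow> c mod 10 = 2"
    "decode c = Fst \<longleftrightarrow> c mod 10 = 3"
    "decode c = Snd \<longleftrightarrow> c mod 10 = 4"
    "decode c = Query \<longleftrightarrow> c mod 10 = 5"
    "decode c = PairP f g \<longleftrightarrow> c mod 10 = 6 \<and> decode (pfst (c div 10)) = f \<and> decode (psnd (c div 10)) = g"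
    "decode c = Comp f g \<longleftrightarrow> c mod 10 = 7 \<and> decode (pfst (c div 10)) = f \<and> decode (psnd (c div 10)) = g"
    "decode c = Prec f g \<longleftrightarrow> c mod 10 = 8 \<and> decode (pfst (c div 10)) = f \<and> decode (psnd (c div 10)) = g"
    "decode c = Mu f \<longleftrightarrow> c mod 10 = 9 \<and> decode (c div 10) = f"
    by (elim disjE; subst decode.simps[of c]; simp)+
qed

lemma decode_mod10:
  "c mod 10 = 0 \<Longrightarrow> decode c = Zero"
  "c mod 10 = 1 \<Longrightarrow> decode c = Succ"
  "c mod 10 = 2 \<Longrightarrow> decode c = Ident"
  "c mod 10 = 3 \<Longrightarrow> decode c = Fst"
  "c mod 10 = 4 \<Longrightarrow> decode c = Snd"
  "c mod 10 = 5 \<Longrightarrow> decode c = Query"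
  "c mod 10 = 6 \<Longrightarrow> decode c = PairP (decode (pfst (c div 10))) (decode (psnd (c div 10)))"
  "c mod 10 = 7 \<Longrightarrow> decode c = Comp (decode (pfst (c div 10))) (decode (psnd (c div 10)))"
  "c mod 10 = 8 \<Longrightarrow> decode c = Prec (decode (pfst (c div 10))) (decode (psnd (c div 10)))"
  "c mod 10 = 9 \<Longrightarrow> decode c = Mu (decode (c div 10))"
  by (simp_all add: decode_eq_iffs)

lemma ce_Ex:
  assumes "decidable (\<lambda>z. Q (pfst z) (psnd z))"
  shows "ce {n. \<exists>y. Q y n}"
proof -
  obtain p where p: "computes p (\<lambda>z. if Q (pfst z) (psnd z) then 0 else 1)"
    using assms unfolding decidable_def computable_def by blast
  have "ev orc (Mu p) n y \<longleftrightarrow> Q y n \<and> (\<forall>i<y. \<not> Q i n)" for orc n y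
    using p by (auto simp: ev_Mu_iff computes_def)
  then have "(\<exists>y. Q y n) \<longleftrightarrow> Phi (encode_prog (Mu p)) (\<lambda>_. None) n \<noteq> None" for n
    by (simp add: Phi_def exists_least_iff[of "\<lambda>y. Q y n"] del: encode_prog.simps)
  then show ?thesis unfolding ce_def by blast
qed

text \<open>Sets generated by rules \<open>x \<leftarrow> p\<^sub>1, p\<^sub>2\<close> chosen through a witness \<open>w\<close>: \<open>R x w\<close> is the side
  condition and \<open>P\<^sub>i x w\<close> encodes the \<open>i\<close>-th premise, \<open>0\<close> meaning that there is none and
  \<open>k + 1\<close> that the premise is \<open>k\<close>.\<close>

definition premise_ok :: "nat \<Rightarrow> nat set \<Rightarrow> bool" where
  "premise_ok k S \<longleftrightarrow> k = 0 \<or> k - 1 \<in> S"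

lemma premise_ok_0 [simp]: "premise_ok 0 S"
  and premise_ok_Suc [simp]: "premise_ok (Suc k) S \<longleftrightarrow> k \<in> S"
  by (simp_all add: premise_ok_def)

definition rule_step ::
  "(nat \<Rightarrow> nat \<Rightarrow> bool) \<Rightarrow> (nat \<Rightarrow> nat \<Rightarrow> nat) \<Rightarrow> (nat \<Rightarrow> nat \<Rightarrow> nat) \<Rightarrow> nat set \<Rightarrow> nat \<Rightarrow> nat \<Rightarrow> bool"
where
  "rule_step R P1 P2 S x w \<longleftrightarrow> R x w \<and> premise_ok (P1 x w) S \<and> premise_ok (P2 x w) S"

lemma rule_step_mono: "rule_step R P1 P2 S x w \<Longrightarrow> S \<subseteq> T \<Longrightarrow> rule_step R P1 P2 T x w"
  by (auto simp: rule_step_def premise_ok_def)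

inductive_set derivable ::
  "(nat \<Rightarrow> nat \<Rightarrow> bool) \<Rightarrow> (nat \<Rightarrow> nat \<Rightarrow> nat) \<Rightarrow> (nat \<Rightarrow> nat \<Rightarrow> nat) \<Rightarrow> nat set"
  for R P1 P2
where
  "R x w \<Longrightarrow> P1 x w = 0 \<or> P1 x w - 1 \<in> derivable R P1 P2 \<Longrightarrow>
   P2 x w = 0 \<or> P2 x w - 1 \<in> derivable R P1 P2 \<Longrightarrow> x \<in> derivable R P1 P2"

lemma derivable_step: "rule_step R P1 P2 (derivable R P1 P2) x w \<Longrightarrow> x \<in> derivable R P1 P2"
  unfolding rule_step_def premise_ok_def by (blast intro: derivable.intros)

definition derivation ::
  "(nat \<Rightarrow> nat \<Rightarrow> bool) \<Rightarrow> (nat \<Rightarrow> nat \<Rightarrow> nat) \<Rightarrow> (nat \<Rightarrow> nat \<Rightarrow> nat) \<Rightarrow> (nat \<times> nat) list \<Rightarrow> bool"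
where
  "derivation R P1 P2 xs \<longleftrightarrow>
     (\<forall>i<length xs. rule_step R P1 P2 (fst ` set (take i xs)) (fst (xs ! i)) (snd (xs ! i)))"

lemma derivation_append:
  assumes "derivation R P1 P2 xs" "derivation R P1 P2 ys"
  shows "derivation R P1 P2 (xs @ ys)"
  unfolding derivation_def
proof (intro allI impI)
  fix i assume i: "i < length (xs @ ys)"
  show "rule_step R P1 P2 (fst ` set (take i (xs @ ys))) (fst ((xs @ ys) ! i)) (snd ((xs @ ys) ! i))"
  proof (cases "i < length xs")
    case True
    then show ?thesis using assms(1) by (simp add: derivation_def nth_append)
  next
    case False
    with i assms(2) have "rule_step R P1 P2 (fst ` set (take (i - length xs) ys))
        (fst (ys ! (i - length xs))) (snd (ys ! (i - length xs)))"
      by (simp add: derivation_def)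
    moreover have "fst ` set (take (i - length xs) ys) \<subseteq> fst ` set (take i (xs @ ys))"
      using False by auto
    ultimately show ?thesis using False by (auto simp: nth_append intro: rule_step_mono)
  qed
qed

lemma derivation_snoc:
  "derivation R P1 P2 xs \<Longrightarrow> rule_step R P1 P2 (fst ` set xs) x w \<Longrightarrow> derivation R P1 P2 (xs @ [(x, w)])"
  by (auto simp: derivation_def nth_append less_Suc_eq)

lemma derivable_imp_derivation:
  "x \<in> derivable R P1 P2 \<Longrightarrow> \<exists>xs. derivation R P1 P2 xs \<and> x \<in> fst ` set xs"
proof (induction rule: derivable.induct)
  case (1 x w)
  have premise: "\<exists>xs. derivation R P1 P2 xs \<and> premise_ok k (fst ` set xs)"
    if "k = 0 \<or> k - 1 \<in> derivable R P1 P2 \<inter> {x. \<exists>xs. derivation R P1 P2 xs \<and> x \<in> fst ` set xs}"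
    for k
  proof (cases "k = 0")
    case True
    have "derivation R P1 P2 []" by (simp add: derivation_def)
    with True show ?thesis by (auto simp: premise_ok_def)
  qed (use that in \<open>auto simp: premise_ok_def\<close>)
  obtain xs1 where xs1: "derivation R P1 P2 xs1" "premise_ok (P1 x w) (fst ` set xs1)"
    using premise "1"(2) by blast
  obtain xs2 where xs2: "derivation R P1 P2 xs2" "premise_ok (P2 x w) (fst ` set xs2)"
    using premise "1"(3) by blast
  have "derivation R P1 P2 ((xs1 @ xs2) @ [(x, w)])"
    using xs1 xs2 "1"(1) by (intro derivation_snoc derivation_append) (auto simp: rule_step_def premise_ok_def)
  then show ?case by force
qed

text \<open>A list of pairs is coded as nested pairs \<open>\<langle>\<langle>x\<^sub>0, w\<^sub>0\<rangle>, \<langle>\<langle>x\<^sub>1, w\<^sub>1\<rangle>, \<dots>\<rangle>\<rangle>\<close>, so its \<open>j\<close>-th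
  entry is reached by \<open>j\<close> applications of \<open>psnd\<close>.\<close>

primrec list_data :: "(nat \<times> nat) list \<Rightarrow> nat" where
  "list_data [] = 0"
| "list_data (p # xs) = pair (prod_encode p) (list_data xs)"

definition list_code :: "(nat \<times> nat) list \<Rightarrow> nat" where
  "list_code xs = pair (length xs) (list_data xs)"

definition nth_fst :: "nat \<Rightarrow> nat \<Rightarrow> nat" where
  "nth_fst d j = pfst (pfst ((psnd ^^ j) d))"

definition nth_snd :: "nat \<Rightarrow> nat \<Rightarrow> nat" where
  "nth_snd d j = psnd (pfst ((psnd ^^ j) d))"

lemma funpow_psnd_list_data: "j \<le> length xs \<Longrightarrow> (psnd ^^ j) (list_data xs) = list_data (drop j xs)"
proof (induction j)
  case (Suc j)
  then show ?case by (simp add: Cons_nth_drop_Suc[symmetric])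
qed simp

lemma nth_fst_list_data: "j < length xs \<Longrightarrow> nth_fst (list_data xs) j = fst (xs ! j)"
  by (simp add: nth_fst_def funpow_psnd_list_data Cons_nth_drop_Suc[symmetric])

lemma nth_snd_list_data: "j < length xs \<Longrightarrow> nth_snd (list_data xs) j = snd (xs ! j)"
  by (simp add: nth_snd_def funpow_psnd_list_data Cons_nth_drop_Suc[symmetric])

definition derivation_code ::
  "(nat \<Rightarrow> nat \<Rightarrow> bool) \<Rightarrow> (nat \<Rightarrow> nat \<Rightarrow> nat) \<Rightarrow> (nat \<Rightarrow> nat \<Rightarrow> nat) \<Rightarrow> nat \<Rightarrow> bool"
where
  "derivation_code R P1 P2 L \<longleftrightarrow>
     (\<forall>i<pfst L. rule_step R P1 P2 (nth_fst (psnd L) ` {..<i}) (nth_fst (psnd L) i) (nth_snd (psnd L) i))"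

lemma derivation_code_sound:
  "derivation_code R P1 P2 L \<Longrightarrow> i < pfst L \<Longrightarrow> nth_fst (psnd L) i \<in> derivable R P1 P2"
proof (induction i rule: less_induct)
  case (less i)
  then have "rule_step R P1 P2 (nth_fst (psnd L) ` {..<i}) (nth_fst (psnd L) i) (nth_snd (psnd L) i)"
    by (simp add: derivation_code_def)
  moreover have "nth_fst (psnd L) ` {..<i} \<subseteq> derivable R P1 P2"
    using less by auto
  ultimately show ?case by (blast intro: derivable_step rule_step_mono)
qed

lemma derivation_code_list_code: "derivation R P1 P2 xs \<Longrightarrow> derivation_code R P1 P2 (list_code xs)"
proof -
  assume xs: "derivation R P1 P2 xs"
  have "nth_fst (list_data xs) ` {..<i} = fst ` set (take i xs)" if "i \<le> length xs" for i
  proof -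
    have "nth_fst (list_data xs) ` {..<i} = (\<lambda>j. fst (xs ! j)) ` {..<i}"
      using that by (auto simp: nth_fst_list_data)
    also have "\<dots> = fst ` set (take i xs)"
      using that by (force simp: in_set_conv_nth)
    finally show ?thesis .
  qed
  with xs show ?thesis
    by (simp add: derivation_code_def list_code_def derivation_def nth_fst_list_data nth_snd_list_data)
qed

lemma derivable_iff_derivation_code:
  "x \<in> derivable R P1 P2 \<longleftrightarrow> (\<exists>L. derivation_code R P1 P2 L \<and> (\<exists>i<pfst L. nth_fst (psnd L) i = x))"
proof
  assume "x \<in> derivable R P1 P2"
  then obtain xs where xs: "derivation R P1 P2 xs" "x \<in> fst ` set xs"
    using derivable_imp_derivation by blast
  from xs(2) obtain i where "i < length xs" "fst (xs ! i) = x" by (auto simp: in_set_conv_nth)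
  then have "\<exists>i<pfst (list_code xs). nth_fst (psnd (list_code xs)) i = x"
    by (auto simp: list_code_def nth_fst_list_data)
  with derivation_code_list_code[OF xs(1)]
  show "\<exists>L. derivation_code R P1 P2 L \<and> (\<exists>i<pfst L. nth_fst (psnd L) i = x)" by blast
qed (auto intro: derivation_code_sound)

lemma premise_ok_image: "premise_ok k (f ` {..<i}) \<longleftrightarrow> k = 0 \<or> (\<exists>j<i. f j = k - 1)"
  by (force simp: premise_ok_def)

lemma ce_derivable:
  assumes R: "decidable (\<lambda>z. R (pfst z) (psnd z))"
    and P1: "computable (\<lambda>z. P1 (pfst z) (psnd z))"
    and P2: "computable (\<lambda>z. P2 (pfst z) (psnd z))"
    and g: "computable g"
  shows "ce {n. g n \<in> derivable R P1 P2}"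
proof -
  note R' = decidable_comp2[OF R] and P1' = computable_comp2[OF P1] and P2' = computable_comp2[OF P2]
  let ?Q = "\<lambda>L n. derivation_code R P1 P2 L \<and> (\<exists>i<pfst L. nth_fst (psnd L) i = g n)"
  have "decidable (\<lambda>z. ?Q (pfst z) (psnd z))"
    unfolding derivation_code_def rule_step_def premise_ok_image nth_fst_def nth_snd_def
    by (intro R' P1' P2' computable_comp[OF g] computable_intros)
  then have "ce {n. \<exists>L. ?Q L n}" by (rule ce_Ex)
  then show ?thesis by (simp add: derivable_iff_derivation_code)
qed

section \<open>Enumerating the embedding of an oracle computation\<close>

text \<open>The oracles of the enumeration: \<open>\<langle>0, u\<rangle>\<close> stands for the part of a characteristic function
  recorded by \<open>D\<^sub>u \<subseteq> X \<oplus> X\<^sup>c\<close> (\<open>2x\<close> for \<open>x \<in> X\<close>, \<open>2x + 1\<close> for \<open>x \<notin> X\<close>), and \<open>\<langle>k + 1, \<langle>t, u\<rangle>\<rangle>\<close> for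
  the oracle of the application of table \<open>t\<close> to table \<open>u\<close>.\<close>

definition char_map :: "nat \<Rightarrow> nat \<Rightarrow> nat option" where
  "char_map u x = (if 2 * x \<in> Dset u then Some 1 else if 2 * x + 1 \<in> Dset u then Some 0 else None)"

definition orc_of :: "nat \<Rightarrow> nat \<Rightarrow> nat option" where
  "orc_of a = (if pfst a = 0 then char_map (psnd a)
               else pjoin (code_map (pfst (psnd a))) (code_map (psnd (psnd a))))"

lemma orc_of_char_map [simp]: "orc_of (pair 0 u) = char_map u"
  by (simp add: orc_of_def)

lemma orc_of_pjoin [simp]: "orc_of (pair (Suc 0) (pair t u)) = pjoin (code_map t) (code_map u)"
  by (simp add: orc_of_def)

abbreviation judg :: "nat \<Rightarrow> nat \<Rightarrow> nat \<Rightarrow> nat \<Rightarrow> nat \<Rightarrow> nat" where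
  "judg tag a b c d \<equiv> pair tag (pair a (pair b (pair c d)))"

abbreviation ev_judg :: "nat \<Rightarrow> nat \<Rightarrow> nat \<Rightarrow> nat \<Rightarrow> nat" where
  "ev_judg a c i y \<equiv> judg 0 a c i y"

abbreviation mu_judg :: "nat \<Rightarrow> nat \<Rightarrow> nat \<Rightarrow> nat \<Rightarrow> nat" where
  "mu_judg a c i k \<equiv> judg 1 a c i k"

abbreviation table_judg :: "nat \<Rightarrow> nat \<Rightarrow> nat \<Rightarrow> nat \<Rightarrow> nat" where
  "table_judg t a c k \<equiv> judg 2 t a c k"

abbreviation emb_judg :: "nat \<Rightarrow> nat \<Rightarrow> nat" where
  "emb_judg m t \<equiv> judg 3 m t 0 0"

abbreviation Phi_emb_judg :: "nat \<Rightarrow> nat \<Rightarrow> nat \<Rightarrow> nat" where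
  "Phi_emb_judg e m u \<equiv> judg 4 e m u 0"

abbreviation jtag :: "nat \<Rightarrow> nat" where "jtag x \<equiv> pfst x"
abbreviation j1 :: "nat \<Rightarrow> nat" where "j1 x \<equiv> pfst (psnd x)"
abbreviation j2 :: "nat \<Rightarrow> nat" where "j2 x \<equiv> pfst (psnd (psnd x))"
abbreviation j3 :: "nat \<Rightarrow> nat" where "j3 x \<equiv> pfst (psnd (psnd (psnd x)))"
abbreviation j4 :: "nat \<Rightarrow> nat" where "j4 x \<equiv> psnd (psnd (psnd (psnd x)))"

lemma judg_collapse: "judg (jtag x) (j1 x) (j2 x) (j3 x) (j4 x) = x"
  by simp

definition table_below :: "nat \<Rightarrow> nat \<Rightarrow> nat \<Rightarrow> nat \<Rightarrow> bool" where
  "table_below t a c k \<longleftrightarrow>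
     (\<forall>x y. code_map t x = Some y \<longrightarrow> graph_code x y < k \<longrightarrow> ev (orc_of a) (decode c) x y)"

definition holds :: "nat \<Rightarrow> bool" where
  "holds x \<longleftrightarrow>
    (if jtag x = 0 then ev (orc_of (j1 x)) (decode (j2 x)) (j3 x) (j4 x)
     else if jtag x = 1 then \<forall>j<j4 x. \<exists>v. v \<noteq> 0 \<and> ev (orc_of (j1 x)) (decode (j2 x)) (pair j (j3 x)) v
     else if jtag x = 2 then table_below (j1 x) (j2 x) (j3 x) (j4 x)
     else if jtag x = 3 then emb_mem (code_map (j2 x)) (j1 x)
     else if jtag x = 4 then emb_mem (Phi (j1 x) (char_map (j3 x))) (j2 x)
     else False)"

lemma holds_ev_judg [simp]: "holds (ev_judg a c i y) \<longleftrightarrow> ev (orc_of a) (decode c) i y"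
  and holds_mu_judg [simp]:
    "holds (mu_judg a c i k) \<longleftrightarrow> (\<forall>j<k. \<exists>v. v \<noteq> 0 \<and> ev (orc_of a) (decode c) (pair j i) v)"
  and holds_table_judg [simp]: "holds (table_judg t a c k) \<longleftrightarrow> table_below t a c k"
  and holds_emb_judg [simp]: "holds (emb_judg m t) \<longleftrightarrow> emb_mem (code_map t) m"
  and holds_Phi_emb_judg [simp]: "holds (Phi_emb_judg e m u) \<longleftrightarrow> emb_mem (Phi e (char_map u)) m"
  by (simp_all add: holds_def)

text \<open>The witnesses of the rules: the intermediate value for \<open>Comp\<close> and \<open>Prec\<close>; the nonzero value
  at \<open>k - 1\<close> for \<open>mu_judg\<close>; for \<open>emb_judg\<close> at \<open>\<langle>n, u\<rangle>\<close> a table \<open>t'\<close> below the application of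
  \<open>t\<close> to \<open>u\<close> paired with the index \<open>c\<close> stored at \<open>0\<close> by \<open>t\<close>; for \<open>Phi_emb_judg\<close> a table below
  \<open>Phi e (char_map u)\<close>.  A table judgment checks the graph codes below \<open>k\<close> one at a time.\<close>

definition ev_side :: "nat \<Rightarrow> nat \<Rightarrow> nat \<Rightarrow> nat \<Rightarrow> bool" where
  "ev_side a c i y \<longleftrightarrow>
    (if c mod 10 = 0 then y = 0
     else if c mod 10 = 1 then y = Suc i
     else if c mod 10 = 2 then y = i
     else if c mod 10 = 3 then y = pfst i
     else if c mod 10 = 4 then y = psnd i
     else if c mod 10 = 5 then orc_of a i = Some y
     else True)"

definition ev_prem1 :: "nat \<Rightarrow> nat \<Rightarrow> nat \<Rightarrow> nat \<Rightarrow> nat \<Rightarrow> nat" where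
  "ev_prem1 a c i y w =
    (if c mod 10 = 6 then Suc (ev_judg a (pfst (c div 10)) i (pfst y))
     else if c mod 10 = 7 then Suc (ev_judg a (psnd (c div 10)) i w)
     else if c mod 10 = 8 then
       (if pfst i = 0 then Suc (ev_judg a (pfst (c div 10)) (psnd i) y)
        else Suc (ev_judg a c (pair (pfst i - 1) (psnd i)) w))
     else if c mod 10 = 9 then Suc (ev_judg a (c div 10) (pair y i) 0)
     else 0)"

definition ev_prem2 :: "nat \<Rightarrow> nat \<Rightarrow> nat \<Rightarrow> nat \<Rightarrow> nat \<Rightarrow> nat" where
  "ev_prem2 a c i y w =
    (if c mod 10 = 6 then Suc (ev_judg a (psnd (c div 10)) i (psnd y))
     else if c mod 10 = 7 then Suc (ev_judg a (pfst (c div 10)) w y)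
     else if c mod 10 = 8 \<and> pfst i \<noteq> 0 then
       Suc (ev_judg a (psnd (c div 10)) (pair (pfst i - 1) (pair w (psnd i))) y)
     else if c mod 10 = 9 then Suc (mu_judg a (c div 10) i y)
     else 0)"

definition judg_rule :: "nat \<Rightarrow> nat \<Rightarrow> bool" where
  "judg_rule x w \<longleftrightarrow>
    (if jtag x = 0 then ev_side (j1 x) (j2 x) (j3 x) (j4 x)
     else if jtag x = 1 then j4 x = 0 \<or> w \<noteq> 0
     else if jtag x = 2 then True
     else if jtag x = 3 then
       (if psnd (j1 x) = 1 then code_map (j2 x) (pfst (pfst (j1 x))) = Some (psnd (pfst (j1 x)))
        else code_map (j2 x) 0 = Some (psnd w))
     else jtag x = 4)"

definition judg_prem1 :: "nat \<Rightarrow> nat \<Rightarrow> nat" where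
  "judg_prem1 x w =
    (if jtag x = 0 then ev_prem1 (j1 x) (j2 x) (j3 x) (j4 x) w
     else if jtag x = 1 then (if j4 x = 0 then 0 else Suc (mu_judg (j1 x) (j2 x) (j3 x) (j4 x - 1)))
     else if jtag x = 2 then (if j4 x = 0 then 0 else Suc (table_judg (j1 x) (j2 x) (j3 x) (j4 x - 1)))
     else if jtag x = 3 then
       (if psnd (j1 x) = 1 then 0
        else Suc (table_judg (pfst w) (pair 1 (pair (j2 x) (psnd (j1 x)))) (psnd w) (pfst w)))
     else if jtag x = 4 then Suc (table_judg w (pair 0 (j3 x)) (j1 x) w)
     else 0)"

definition judg_prem2 :: "nat \<Rightarrow> nat \<Rightarrow> nat" where
  "judg_prem2 x w =
    (if jtag x = 0 then ev_prem2 (j1 x) (j2 x) (j3 x) (j4 x) w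
     else if jtag x = 1 then (if j4 x = 0 then 0 else Suc (ev_judg (j1 x) (j2 x) (pair (j4 x - 1) (j3 x)) w))
     else if jtag x = 2 then
       (if j4 x \<noteq> 0 \<and> psnd (j4 x - 1) = 1
           \<and> code_map (j1 x) (pfst (pfst (j4 x - 1))) = Some (psnd (pfst (j4 x - 1)))
        then Suc (ev_judg (j2 x) (j3 x) (pfst (pfst (j4 x - 1))) (psnd (pfst (j4 x - 1))))
        else 0)
     else if jtag x = 3 then (if psnd (j1 x) = 1 then 0 else Suc (emb_judg (pfst (j1 x)) (pfst w)))
     else if jtag x = 4 then Suc (emb_judg (j2 x) w)
     else 0)"

lemmas judg_rules = judg_rule_def judg_prem1_def judg_prem2_def

definition judgments :: "nat set" where
  "judgments = derivable judg_rule judg_prem1 judg_prem2"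

lemma decidable_code_map_eq_Some:
  assumes "computable T" "computable X" "computable Y"
  shows "decidable (\<lambda>z. code_map (T z) (X z) = Some (Y z))"
proof -
  have "decidable (\<lambda>z. code_map (pfst z) (pfst (psnd z)) = Some (psnd (psnd z)))"
    unfolding code_map_eq_Some_iff graph_code_def by (intro computable_intros)
  from decidable_comp[OF this computable_pair[OF assms(1) computable_pair[OF assms(2,3)]]]
  show ?thesis by simp
qed

lemma orc_of_eq_Some_iff:
  "orc_of a x = Some y \<longleftrightarrow>
    (if pfst a = 0 then (2 * x \<in> Dset (psnd a) \<and> y = 1) \<or>
                        (2 * x \<notin> Dset (psnd a) \<and> 2 * x + 1 \<in> Dset (psnd a) \<and> y = 0)
     else if even x then code_map (pfst (psnd a)) (x div 2) = Some y
     else code_map (psnd (psnd a)) (x div 2) = Some y)"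
  by (auto simp: orc_of_def char_map_def pjoin_def)

lemma decidable_judg_rule: "decidable (\<lambda>z. judg_rule (pfst z) (psnd z))"
  unfolding judg_rule_def ev_side_def orc_of_eq_Some_iff
  by (intro computable_intros decidable_code_map_eq_Some)

lemma computable_judg_prem1: "computable (\<lambda>z. judg_prem1 (pfst z) (psnd z))"
  unfolding judg_prem1_def ev_prem1_def by (intro computable_intros)

lemma computable_judg_prem2: "computable (\<lambda>z. judg_prem2 (pfst z) (psnd z))"
  unfolding judg_prem2_def ev_prem2_def by (intro computable_intros decidable_code_map_eq_Some)

abbreviation step_from_holds :: "nat \<Rightarrow> nat \<Rightarrow> bool" where
  "step_from_holds x w \<equiv> rule_step judg_rule judg_prem1 judg_prem2 (Collect holds) x w"

lemma ev_side_sound: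
  assumes "c mod 10 < 6" "ev_side a c i y"
  shows "ev (orc_of a) (decode c) i y"
proof -
  from assms(1) consider "c mod 10 = 0" | "c mod 10 = 1" | "c mod 10 = 2" | "c mod 10 = 3"
    | "c mod 10 = 4" | "c mod 10 = 5" by linarith
  then show ?thesis using assms(2)
    by cases (simp_all add: ev_side_def decode_mod10 ev_Zero_iff ev_Succ_iff ev_Ident_iff
        ev_Fst_iff ev_Snd_iff ev.ev_query)
qed

lemma ev_step_sound:
  assumes "step_from_holds (ev_judg a c i y) w"
  shows "ev (orc_of a) (decode c) i y"
proof -
  let ?c1 = "pfst (c div 10)" and ?c2 = "psnd (c div 10)"
  have side: "ev_side a c i y"
    and p1: "premise_ok (ev_prem1 a c i y w) (Collect holds)"
    and p2: "premise_ok (ev_prem2 a c i y w) (Collect holds)"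
    using assms by (simp_all add: rule_step_def judg_rules)
  consider "c mod 10 < 6" | "c mod 10 = 6" | "c mod 10 = 7" | "c mod 10 = 8" | "c mod 10 = 9"
    by linarith
  then show ?thesis
  proof cases
    case 1
    then show ?thesis using side by (rule ev_side_sound)
  next
    case 2
    with p1 p2 have "ev (orc_of a) (decode ?c1) i (pfst y)" "ev (orc_of a) (decode ?c2) i (psnd y)"
      by (simp_all add: ev_prem1_def ev_prem2_def)
    with 2 show ?thesis using ev.ev_pair by (fastforce simp: decode_mod10)
  next
    case 3
    with p1 p2 have "ev (orc_of a) (decode ?c2) i w" "ev (orc_of a) (decode ?c1) w y"
      by (simp_all add: ev_prem1_def ev_prem2_def)
    with 3 show ?thesis by (simp add: decode_mod10 ev_Comp_iff) blast
  next
    case 4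
    obtain n r where i: "i = pair n r" by (metis prod.collapse prod_decode_inverse)
    show ?thesis
    proof (cases n)
      case 0
      with 4 p1 i show ?thesis by (simp add: ev_prem1_def decode_mod10 ev_Prec_0_iff)
    next
      case (Suc n')
      with 4 p1 p2 i show ?thesis by (auto simp: ev_prem1_def ev_prem2_def decode_mod10 ev_Prec_Suc_iff)
    qed
  next
    case 5
    with p1 p2 have "ev (orc_of a) (decode (c div 10)) (pair y i) 0"
      "\<forall>j<y. \<exists>v. v \<noteq> 0 \<and> ev (orc_of a) (decode (c div 10)) (pair j i) v"
      by (simp_all add: ev_prem1_def ev_prem2_def holds_def)
    with 5 show ?thesis by (simp add: decode_mod10 ev_Mu_iff)
  qed
qed

lemma mu_step_sound:
  assumes "step_from_holds (mu_judg a c i k) w"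
  shows "\<forall>j<k. \<exists>v. v \<noteq> 0 \<and> ev (orc_of a) (decode c) (pair j i) v"
proof (cases k)
  case (Suc k')
  with assms have "w \<noteq> 0" "\<forall>j<k'. \<exists>v. v \<noteq> 0 \<and> ev (orc_of a) (decode c) (pair j i) v"
    "ev (orc_of a) (decode c) (pair k' i) w"
    by (simp_all add: rule_step_def judg_rules holds_def)
  with Suc show ?thesis by (auto simp: less_Suc_eq)
qed simp

lemma table_below_self: "table_below t a c t \<Longrightarrow> code_map t \<subseteq>\<^sub>m Phi c (orc_of a)"
  by (rule map_le_SomeI)
    (simp add: table_below_def Phi_eq_Some_iff code_map_eq_Some_iff Dset_less)

lemma table_step_sound:
  assumes "step_from_holds (table_judg t a c k) w"
  shows "table_below t a c k"
proof (cases k)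
  case (Suc k')
  with assms have below: "table_below t a c k'"
    and last: "\<And>x y. k' = graph_code x y \<Longrightarrow> code_map t x = Some y \<Longrightarrow> ev (orc_of a) (decode c) x y"
    by (auto simp: rule_step_def judg_prem1_def judg_prem2_def graph_code_def)
  show ?thesis unfolding table_below_def
  proof (intro allI impI)
    fix x y assume "code_map t x = Some y" "graph_code x y < k"
    with Suc below last show "ev (orc_of a) (decode c) x y"
      by (cases "graph_code x y = k'") (auto simp: table_below_def)
  qed
qed (simp add: table_below_def)

lemma emb_step_sound:
  assumes "step_from_holds (judg 3 m t c d) w"
  shows "emb_mem (code_map t) m"
proof (cases "psnd m = 1")
  case True
  with assms have "code_map t (pfst (pfst m)) = Some (psnd (pfst m))"
    by (simp add: rule_step_def judg_rule_def)
  moreover have "m = graph_code (pfst (pfst m)) (psnd (pfst m))"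
    using True unfolding graph_code_def by (metis prod.collapse prod_decode_inverse)
  ultimately show ?thesis by (metis emb_mem_graph_code_iff)
next
  case False
  let ?t' = "pfst w" and ?u = "psnd m"
  from assms False have c: "code_map t 0 = Some (psnd w)"
    and tb: "table_below ?t' (pair 1 (pair t ?u)) (psnd w) ?t'"
    and n: "emb_mem (code_map ?t') (pfst m)"
    by (simp_all add: rule_step_def judg_rules)
  have "code_map ?t' \<subseteq>\<^sub>m Bapp (code_map t) (code_map ?u)"
    using table_below_self[OF tb] c by (simp add: Bapp_Some)
  with n have "emb_mem (Bapp (code_map t) (code_map ?u)) (pfst m)" by (rule emb_mem_mono)
  with False have "emb_mem (code_map t) (pair (pfst m) ?u)" by (rule emb_app)
  then show ?thesis by simp
qed

lemma Phi_emb_step_sound: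
  assumes "step_from_holds (judg 4 e m u d) w"
  shows "emb_mem (Phi e (char_map u)) m"
proof -
  from assms have "table_below w (pair 0 u) e w" and m: "emb_mem (code_map w) m"
    by (simp_all add: rule_step_def judg_prem1_def judg_prem2_def)
  then have "code_map w \<subseteq>\<^sub>m Phi e (char_map u)" using table_below_self by fastforce
  with m show ?thesis by (rule emb_mem_mono)
qed

lemma step_sound: "step_from_holds x w \<Longrightarrow> holds x"
proof -
  assume step: "step_from_holds x w"
  from step have "jtag x \<le> 4" by (auto simp: rule_step_def judg_rule_def split: if_splits)
  then consider "jtag x = 0" | "jtag x = 1" | "jtag x = 2" | "jtag x = 3" | "jtag x = 4" by linarith
  moreover obtain a b c d where x: "x = judg (jtag x) a b c d"
    by (metis judg_collapse)
  ultimately show "holds x"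
  proof cases
    case 1
    with x step show ?thesis using ev_step_sound by (metis holds_ev_judg)
  next
    case 2
    with x step show ?thesis using mu_step_sound by (metis One_nat_def holds_mu_judg)
  next
    case 3
    with x step show ?thesis using table_step_sound by (metis holds_table_judg)
  next
    case 4
    with x step show ?thesis using emb_step_sound by (simp add: holds_def)
  next
    case 5
    with x step show ?thesis using Phi_emb_step_sound by (simp add: holds_def)
  qed
qed

lemma judgments_sound: "x \<in> judgments \<Longrightarrow> holds x"
  unfolding judgments_def
proof (induction rule: derivable.induct)
  case (1 x w)
  then have "step_from_holds x w"
    by (auto simp: rule_step_def premise_ok_def)
  then show ?case by (rule step_sound)
qed

lemma judgments_intro:
  "judg_rule x w \<Longrightarrow> premise_ok (judg_prem1 x w) judgments \<Longrightarrow> premise_ok (judg_prem2 x w) judgments \<Longrightarrow>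
   x \<in> judgments"
  unfolding judgments_def by (rule derivable_step) (simp add: rule_step_def)

lemma mu_judg_complete:
  "\<forall>j<k. \<exists>v. v \<noteq> 0 \<and> ev_judg a c (pair j i) v \<in> judgments \<Longrightarrow> mu_judg a c i k \<in> judgments"
proof (induction k)
  case 0
  show ?case by (rule judgments_intro[where w = 0]) (simp_all add: judg_rules)
next
  case (Suc k)
  then have ih: "mu_judg a c i k \<in> judgments" by simp
  from Suc.prems obtain v where "v \<noteq> 0" "ev_judg a c (pair k i) v \<in> judgments" by blast
  with ih show ?case
    by (intro judgments_intro[where w = v]) (simp_all add: judg_rules)
qed

lemma ev_judg_complete: "ev orc p i y \<Longrightarrow> orc = orc_of a \<Longrightarrow> decode c = p \<Longrightarrow> ev_judg a c i y \<in> judgments"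
proof (induction arbitrary: c rule: ev.induct)
  case (ev_comp g x y f z)
  then show ?case
    by (intro judgments_intro[where w = y]) (simp_all add: judg_rules ev_side_def ev_prem1_def ev_prem2_def decode_eq_iffs)
next
  case (ev_precS f g n y v w)
  then show ?case
    by (intro judgments_intro[where w = v]) (simp_all add: judg_rules ev_side_def ev_prem1_def ev_prem2_def decode_eq_iffs)
next
  case (ev_mu f y x)
  then have "decode (c div 10) = f" by (simp add: decode_eq_iffs)
  with ev_mu.IH(2) ev_mu.prems(1) have "mu_judg a (c div 10) x y \<in> judgments"
    by (intro mu_judg_complete) blast
  with ev_mu show ?case
    by (intro judgments_intro[where w = 0]) (simp_all add: judg_rules ev_side_def ev_prem1_def ev_prem2_def decode_eq_iffs)
qed (intro judgments_intro[where w = 0];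
     simp add: judg_rules ev_side_def ev_prem1_def ev_prem2_def decode_eq_iffs)+

lemma table_judg_complete: "table_below t a c k \<Longrightarrow> table_judg t a c k \<in> judgments"
proof (induction k)
  case 0
  show ?case by (rule judgments_intro[where w = 0]) (simp_all add: judg_rules)
next
  case (Suc k)
  then have ih: "table_judg t a c k \<in> judgments" by (simp add: table_below_def)
  have last: "ev_judg a c (pfst (pfst k)) (psnd (pfst k)) \<in> judgments"
    if "psnd k = 1" "code_map t (pfst (pfst k)) = Some (psnd (pfst k))"
  proof -
    from that(1) have "graph_code (pfst (pfst k)) (psnd (pfst k)) = k"
      unfolding graph_code_def by (metis prod.collapse prod_decode_inverse)
    with Suc.prems that(2) show ?thesis
      by (intro ev_judg_complete) (auto simp: table_below_def)
  qed
  show ?case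
    by (rule judgments_intro[where w = 0])
      (use ih last in \<open>simp_all add: judg_rules\<close>)
qed

lemma table_below_map_code:
  assumes "finite (dom \<sigma>)" "\<sigma> \<subseteq>\<^sub>m Phi c (orc_of a)"
  shows "table_below (map_code \<sigma>) a c k"
  using assms by (auto simp: table_below_def Phi_eq_Some_iff dest: map_le_SomeD)

lemma emb_mem_not_empty: "emb_mem \<phi> m \<Longrightarrow> \<phi> \<noteq> Map.empty"
  by (induction rule: emb_mem.induct) (auto simp: Bapp_def split: option.splits)

lemma emb_judg_complete: "emb_mem (code_map t) m \<Longrightarrow> emb_judg m t \<in> judgments"
proof (induction m arbitrary: t rule: less_induct)
  case (less m t)
  show ?case
  proof (cases "psnd m = 1")
    case True
    then have "m = graph_code (pfst (pfst m)) (psnd (pfst m))"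
      unfolding graph_code_def by (metis prod.collapse prod_decode_inverse)
    with less.prems have "code_map t (pfst (pfst m)) = Some (psnd (pfst m))"
      by (metis emb_mem_graph_code_iff)
    with True show ?thesis
      by (intro judgments_intro[where w = 0]) (simp_all add: judg_rules)
  next
    case False
    let ?n = "pfst m" and ?u = "psnd m"
    let ?\<phi> = "Bapp (code_map t) (code_map ?u)"
    have n: "emb_mem ?\<phi> ?n"
      using less.prems False emb_mem_pair_iff[OF False, of "code_map t" ?n] by simp
    then obtain c where c: "code_map t 0 = Some c"
      using emb_mem_not_empty by (fastforce simp: Bapp_def split: option.splits)
    from n obtain D where D: "finite D" "emb_mem (?\<phi> |` D) ?n" using emb_mem_compact by blast
    define t' where "t' = map_code (?\<phi> |` D)"
    have fin: "finite (dom (?\<phi> |` D))" using D(1) by simp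
    then have "code_map t' = ?\<phi> |` D" by (simp add: t'_def)
    moreover have "?n < m" using emb_mem_nonzero[OF less.prems] by (intro pfst_less) auto
    ultimately have "emb_judg ?n t' \<in> judgments" using less.IH D(2) by simp
    moreover have "table_judg t' (pair 1 (pair t ?u)) c t' \<in> judgments"
      using fin c unfolding t'_def
      by (intro table_judg_complete table_below_map_code) (auto simp: Bapp_Some intro: map_le_trans restrict_map_le)
    ultimately show ?thesis using False c
      by (intro judgments_intro[where w = "pair t' c"]) (simp_all add: judg_rules)
  qed
qed

lemma Phi_emb_judg_complete:
  assumes "emb_mem (Phi e (char_map u)) m"
  shows "Phi_emb_judg e m u \<in> judgments"
proof -
  from assms obtain D where D: "finite D" "emb_mem (Phi e (char_map u) |` D) m"
    using emb_mem_compact by blast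
  define w where "w = map_code (Phi e (char_map u) |` D)"
  have fin: "finite (dom (Phi e (char_map u) |` D))" using D(1) by simp
  then have "emb_judg m w \<in> judgments" using D(2) by (intro emb_judg_complete) (simp add: w_def)
  moreover have "table_judg w (pair 0 u) e w \<in> judgments"
    using fin unfolding w_def by (intro table_judg_complete table_below_map_code) (simp_all add: restrict_map_le)
  ultimately show ?thesis
    by (intro judgments_intro[where w = w]) (simp_all add: judg_rules)
qed

lemma ce_emb_Phi_char_map: "ce {n. emb_mem (Phi e (char_map (psnd n))) (pfst n)}"
proof -
  have "ce {n. Phi_emb_judg e (pfst n) (psnd n) \<in> judgments}"
    unfolding judgments_def
    by (intro ce_derivable decidable_judg_rule computable_judg_prem1 computable_judg_prem2 computable_intros)
  moreover have "Phi_emb_judg e m u \<in> judgments \<longleftrightarrow> emb_mem (Phi e (char_map u)) m" for m u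
    using judgments_sound Phi_emb_judg_complete by fastforce
  ultimately show ?thesis by simp
qed

section \<open>Relativization to an oracle set\<close>

lemma double_in_sjoin_iff [simp]: "2 * x \<in> sjoin X (- X) \<longleftrightarrow> x \<in> X"
  by (auto simp: sjoin_def) presburger

lemma Suc_double_in_sjoin_iff [simp]: "Suc (2 * x) \<in> sjoin X (- X) \<longleftrightarrow> x \<notin> X"
  by (auto simp: sjoin_def) presburger+

lemma char_map_le_charfn: "Dset u \<subseteq> sjoin X (- X) \<Longrightarrow> char_map u \<subseteq>\<^sub>m charfn X"
  by (rule map_le_SomeI) (auto simp: char_map_def charfn_def split: if_splits)

lemma charfn_restrict_le_char_map:
  assumes "finite D"
  obtains u where "Dset u \<subseteq> sjoin X (- X)" "charfn X |` D \<subseteq>\<^sub>m char_map u"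
proof
  let ?S = "(\<lambda>n. 2 * n) ` (D \<inter> X) \<union> (\<lambda>n. 2 * n + 1) ` (D - X)"
  have "Dset (set_encode ?S) = ?S" using assms by (simp add: Dset_eq_set_decode)
  moreover have "2 * n \<noteq> 2 * k + 1" for n k :: nat by presburger
  ultimately show "Dset (set_encode ?S) \<subseteq> sjoin X (- X)"
    and "charfn X |` D \<subseteq>\<^sub>m char_map (set_encode ?S)"
    by (auto simp: map_le_def char_map_def charfn_def restrict_map_def)
qed

theorem emb_Phi_charfn:
  "emb (Phi e (charfn X)) = Gapp {n. emb_mem (Phi e (char_map (psnd n))) (pfst n)} (sjoin X (- X))"
proof (intro set_eqI iffI)
  fix m assume "m \<in> emb (Phi e (charfn X))"
  then obtain D where "finite D" "emb_mem (Phi e (charfn X) |` D) m"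
    using emb_mem_compact by (auto simp: emb_def)
  moreover obtain D' where "finite D'" "Phi e (charfn X) |` D \<subseteq>\<^sub>m Phi e (charfn X |` D')"
    using Phi_compact \<open>finite D\<close> by blast
  moreover obtain u where "Dset u \<subseteq> sjoin X (- X)" "charfn X |` D' \<subseteq>\<^sub>m char_map u"
    using charfn_restrict_le_char_map \<open>finite D'\<close> by blast
  ultimately have "emb_mem (Phi e (char_map u)) m" "Dset u \<subseteq> sjoin X (- X)"
    by (meson emb_mem_mono Phi_mono map_le_trans)+
  then show "m \<in> Gapp {n. emb_mem (Phi e (char_map (psnd n))) (pfst n)} (sjoin X (- X))"
    unfolding Gapp_def by auto
next
  fix m assume "m \<in> Gapp {n. emb_mem (Phi e (char_map (psnd n))) (pfst n)} (sjoin X (- X))"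
  then obtain u where "emb_mem (Phi e (char_map u)) m" "Dset u \<subseteq> sjoin X (- X)"
    unfolding Gapp_def by auto
  then show "m \<in> emb (Phi e (charfn X))"
    unfolding emb_def by (blast intro: emb_mem_mono Phi_mono char_map_le_charfn)
qed

theorem theorem7p3:
  shows "\<exists>f :: (nat \<Rightarrow> nat option) \<Rightarrow> nat set.
           inj f
         \<and> (\<forall>\<phi> \<psi>. f (Bapp \<phi> \<psi>) = Gapp (f \<phi>) (f \<psi>))
         \<and> (\<forall>X \<phi>. \<phi> \<in> BX X \<longrightarrow> f \<phi> \<in> GY (sjoin X (- X)))"
proof (intro exI[of _ emb] conjI allI impI)
  show "inj emb" by (rule inj_emb)
  show "emb (Bapp \<phi> \<psi>) = Gapp (emb \<phi>) (emb \<psi>)" for \<phi> \<psi> by (rule emb_Bapp)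
  fix X \<phi> assume "\<phi> \<in> BX X"
  then obtain e where "\<phi> = Phi e (charfn X)" by (auto simp: BX_def)
  then show "emb \<phi> \<in> GY (sjoin X (- X))"
    by (simp add: emb_Phi_charfn GY_app GY_ce ce_emb_Phi_char_map GY_base)
qed

end
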